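(* Let $M$ be a commutative monoid. The free $\mathbb{H}M$-module functor $\mathcal{Z}:\mathbf{Set}\!\downarrow_M\to\mathbb{H}M\text{-}\mathrm{Mod}$ is a symmetric monoidal functor: there are natural and coherent isomorphisms of $\mathbb{H}M$-modules $\mathcal{Z}(S\times T)\cong\mathcal{Z}S\otimes_{\mathbb{H}M}\mathcal{Z}T$ and $\mathcal{Z}\{e\}\cong\mathbb{Z}$, for all sets $S,T$ over $M$.
   Context: Let $M$ be a commutative monoid with identity $e$. $\mathbb{H}M$ has objects the elements of $M$ and morphisms $(x,y):x\to xy$, composition $(xy,z)(x,y)=(x,yz)$; an $\mathbb{H}M$-module $\mathcal{A}$ is a functor $\mathbb{H}M\to\mathbf{Ab}$, i.e. groups $\mathcal{A}(x)$ with $y_*:\mathcal{A}(x)\to\mathcal{A}(xy)$, $y_*z_*=(yz)_*$, $e_*=\mathrm{id}$. The tensor product $(\mathcal{A}\otimes_{\mathbb{H}M}\mathcal{B})(x)$ is the quotient of $\bigoplus_{zt=x}\mathcal{A}(z)\otimes\mathcal{B}(t)$ by the relations $u_*a\otimes b=a\otimes u_*b$ ($a\in\mathcal{A}(v),b\in\mathcal{B}(w),uvw=x$), with $y_*(a\otimes b)=y_*a\otimes b$; this makes $\mathbb{H}M$-modules a symmetric monoidal category with unit $\mathbb{Z}$ ($\mathbb{Z}(x)=\mathbb{Z}$, all $y_*$ the identity). $\mathbf{Set}\!\downarrow_M$ is the category of sets $S$ with a map $\pi:S\to M$, symmetric monoidal with tensor $S\times T$, $\pi(s,t)=\pi(s)\pi(t)$,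 and unit $\{e\}$ with $\pi(e)=e$. For a set $S$ over $M$, $\mathcal{Z}S(x)$ is the free abelian group on pairs $(u,s)\in M\times S$ with $u\,\pi(s)=x$, $y_*(u,s)=(uy,s)$, and $(\mathcal{Z}\varphi)_x(u,s)=(u,\varphi s)$. *)

theory Defs
  imports "HOL-Algebra.Free_Abelian_Groups" "HOL-Algebra.Elementary_Groups" "HOL-Algebra.Coset"
begin

text \<open>The commutative monoid M is the type 'm of class comm_monoid_mult (identity e = 1).
  An HM-module is a family of abelian groups grp x (x in M) together with the maps
  act x y : grp x \<rightarrow> grp (x*y), i.e. y_* on the component at x.\<close>

record ('m, 'a) hmmod =
  grp :: "'m \<Rightarrow> 'a monoid"
  act :: "'m \<Rightarrow> 'm \<Rightarrow> 'a \<Rightarrow> 'a"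

definition hm_module :: "('m::comm_monoid_mult, 'a) hmmod \<Rightarrow> bool" where
  "hm_module A \<longleftrightarrow>
     (\<forall>x. comm_group (grp A x)) \<and>
     (\<forall>x y. act A x y \<in> hom (grp A x) (grp A (x * y))) \<and>
     (\<forall>x y z a. a \<in> carrier (grp A x) \<longrightarrow> act A (x * y) z (act A x y a) = act A x (y * z) a) \<and>
     (\<forall>x a. a \<in> carrier (grp A x) \<longrightarrow> act A x 1 a = a)"

definition hm_hom :: "('m::comm_monoid_mult, 'a) hmmod \<Rightarrow> ('m, 'b) hmmod \<Rightarrow> ('m \<Rightarrow> 'a \<Rightarrow> 'b) \<Rightarrow> bool" where
  "hm_hom A B f \<longleftrightarrow>
     (\<forall>x. f x \<in> hom (grp A x) (grp B x)) \<and>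
     (\<forall>x y a. a \<in> carrier (grp A x) \<longrightarrow> f (x * y) (act A x y a) = act B x y (f x a))"

definition hm_iso :: "('m::comm_monoid_mult, 'a) hmmod \<Rightarrow> ('m, 'b) hmmod \<Rightarrow> ('m \<Rightarrow> 'a \<Rightarrow> 'b) \<Rightarrow> bool" where
  "hm_iso A B f \<longleftrightarrow> hm_hom A B f \<and> (\<forall>x. bij_betw (f x) (carrier (grp A x)) (carrier (grp B x)))"

definition hm_eq :: "('m, 'a) hmmod \<Rightarrow> ('m \<Rightarrow> 'a \<Rightarrow> 'b) \<Rightarrow> ('m \<Rightarrow> 'a \<Rightarrow> 'b) \<Rightarrow> bool" where
  "hm_eq A f g \<longleftrightarrow> (\<forall>x. \<forall>a \<in> carrier (grp A x). f x a = g x a)"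

definition zunit :: "('m::comm_monoid_mult, int) hmmod" where
  "zunit = \<lparr>grp = (\<lambda>x. integer_group), act = (\<lambda>x y n. n)\<rparr>"

text \<open>Tensor product of HM-modules: (A \<otimes> B)(x) is the free abelian group on the
  generators a \<otimes> b (a \<in> A(z), b \<in> B(t), z t = x), recorded as (z,t,a,b), modulo the
  subgroup generated by bilinearity and the relations u_* a \<otimes> b = a \<otimes> u_* b.\<close>

definition tgens :: "('m::comm_monoid_mult, 'a) hmmod \<Rightarrow> ('m, 'b) hmmod \<Rightarrow> 'm \<Rightarrow> ('m \<times> 'm \<times> 'a \<times> 'b) set" where
  "tgens A B x = {(z, t, a, b). z * t = x \<and> a \<in> carrier (grp A z) \<and> b \<in> carrier (grp B t)}"

definition tfree :: "('m::comm_monoid_mult, 'a) hmmod \<Rightarrow> ('m, 'b) hmmod \<Rightarrow> 'm \<Rightarrow> ('m \<times> 'm \<times> 'a \<times> 'b \<Rightarrow>\<^sub>0 int) monoid" where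
  "tfree A B x = free_Abelian_group (tgens A B x)"

definition trelgens :: "('m::comm_monoid_mult, 'a) hmmod \<Rightarrow> ('m, 'b) hmmod \<Rightarrow> 'm \<Rightarrow> ('m \<times> 'm \<times> 'a \<times> 'b \<Rightarrow>\<^sub>0 int) set" where
  "trelgens A B x =
     {frag_of (z, t, a \<otimes>\<^bsub>grp A z\<^esub> a', b) - frag_of (z, t, a, b) - frag_of (z, t, a', b) | z t a a' b.
        z * t = x \<and> a \<in> carrier (grp A z) \<and> a' \<in> carrier (grp A z) \<and> b \<in> carrier (grp B t)}
   \<union> {frag_of (z, t, a, b \<otimes>\<^bsub>grp B t\<^esub> b') - frag_of (z, t, a, b) - frag_of (z, t, a, b') | z t a b b'.
        z * t = x \<and> a \<in> carrier (grp A z) \<and> b \<in> carrier (grp B t) \<and> b' \<in> carrier (grp B t)}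
   \<union> {frag_of (v * u, w, act A v u a, b) - frag_of (v, u * w, a, act B w u b) | u v w a b.
        u * v * w = x \<and> a \<in> carrier (grp A v) \<and> b \<in> carrier (grp B w)}"

definition trels :: "('m::comm_monoid_mult, 'a) hmmod \<Rightarrow> ('m, 'b) hmmod \<Rightarrow> 'm \<Rightarrow> ('m \<times> 'm \<times> 'a \<times> 'b \<Rightarrow>\<^sub>0 int) set" where
  "trels A B x = generate (tfree A B x) (trelgens A B x)"

definition tcls :: "('m::comm_monoid_mult, 'a) hmmod \<Rightarrow> ('m, 'b) hmmod \<Rightarrow> 'm \<Rightarrow> ('m \<times> 'm \<times> 'a \<times> 'b \<Rightarrow>\<^sub>0 int) \<Rightarrow> ('m \<times> 'm \<times> 'a \<times> 'b \<Rightarrow>\<^sub>0 int) set" where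
  "tcls A B x p = trels A B x #>\<^bsub>tfree A B x\<^esub> p"

definition rep :: "'c set \<Rightarrow> 'c" where
  "rep c = (SOME p. p \<in> c)"

definition tensor :: "('m::comm_monoid_mult, 'a) hmmod \<Rightarrow> ('m, 'b) hmmod \<Rightarrow> ('m, ('m \<times> 'm \<times> 'a \<times> 'b \<Rightarrow>\<^sub>0 int) set) hmmod" where
  "tensor A B =
     \<lparr>grp = (\<lambda>x. tfree A B x Mod trels A B x),
      act = (\<lambda>x y c. tcls A B (x * y)
               (frag_extend (\<lambda>(z, t, a, b). frag_of (z * y, t, act A z y a, b)) (rep c)))\<rparr>"

definition tensor_hom :: "('m::comm_monoid_mult, 'a2) hmmod \<Rightarrow> ('m, 'b2) hmmod \<Rightarrow>
    ('m \<Rightarrow> 'a \<Rightarrow> 'a2) \<Rightarrow> ('m \<Rightarrow> 'b \<Rightarrow> 'b2) \<Rightarrow>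
    'm \<Rightarrow> ('m \<times> 'm \<times> 'a \<times> 'b \<Rightarrow>\<^sub>0 int) set \<Rightarrow> ('m \<times> 'm \<times> 'a2 \<times> 'b2 \<Rightarrow>\<^sub>0 int) set" where
  "tensor_hom A' B' f g x c =
     tcls A' B' x (frag_extend (\<lambda>(z, t, a, b). frag_of (z, t, f z a, g t b)) (rep c))"

definition tassoc :: "('m::comm_monoid_mult, 'a) hmmod \<Rightarrow> ('m, 'b) hmmod \<Rightarrow> ('m, 'c) hmmod \<Rightarrow> 'm \<Rightarrow>
    ('m \<times> 'm \<times> ('m \<times> 'm \<times> 'a \<times> 'b \<Rightarrow>\<^sub>0 int) set \<times> 'c \<Rightarrow>\<^sub>0 int) set \<Rightarrow>
    ('m \<times> 'm \<times> 'a \<times> ('m \<times> 'm \<times> 'b \<times> 'c \<Rightarrow>\<^sub>0 int) set \<Rightarrow>\<^sub>0 int) set" where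
  "tassoc A B C x c =
     tcls A (tensor B C) x
       (frag_extend (\<lambda>(z, t, d, w).
           frag_extend (\<lambda>(z1, t1, a, b). frag_of (z1, t1 * t, a, tcls B C (t1 * t) (frag_of (t1, t, b, w))))
             (rep d))
        (rep c))"

definition gext :: "'a monoid \<Rightarrow> ('k \<Rightarrow> 'a) \<Rightarrow> ('k \<Rightarrow>\<^sub>0 int) \<Rightarrow> 'a" where
  "gext G f p = finprod G (\<lambda>k. f k [^]\<^bsub>G\<^esub> (poly_mapping.lookup p k)) (Poly_Mapping.keys p)"

definition runit :: "('m::comm_monoid_mult, 'a) hmmod \<Rightarrow> 'm \<Rightarrow> ('m \<times> 'm \<times> 'a \<times> int \<Rightarrow>\<^sub>0 int) set \<Rightarrow> 'a" where
  "runit A x c = gext (grp A x) (\<lambda>(z, t, a, n). act A z t a [^]\<^bsub>grp A x\<^esub> n) (rep c)"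

definition lunit :: "('m::comm_monoid_mult, 'a) hmmod \<Rightarrow> 'm \<Rightarrow> ('m \<times> 'm \<times> int \<times> 'a \<Rightarrow>\<^sub>0 int) set \<Rightarrow> 'a" where
  "lunit A x c = gext (grp A x) (\<lambda>(z, t, n, a). act A t z a [^]\<^bsub>grp A x\<^esub> n) (rep c)"

definition tswap :: "('m::comm_monoid_mult, 'a) hmmod \<Rightarrow> ('m, 'b) hmmod \<Rightarrow> 'm \<Rightarrow>
    ('m \<times> 'm \<times> 'a \<times> 'b \<Rightarrow>\<^sub>0 int) set \<Rightarrow> ('m \<times> 'm \<times> 'b \<times> 'a \<Rightarrow>\<^sub>0 int) set" where
  "tswap A B x c = tcls B A x (frag_extend (\<lambda>(z, t, a, b). frag_of (t, z, b, a)) (rep c))"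

text \<open>Sets over M: a set S with a map \<pi> : S \<rightarrow> M. Morphisms of sets over M.\<close>

definition over_hom :: "'s set \<Rightarrow> ('s \<Rightarrow> 'm) \<Rightarrow> 't set \<Rightarrow> ('t \<Rightarrow> 'm) \<Rightarrow> ('s \<Rightarrow> 't) \<Rightarrow> bool" where
  "over_hom S \<pi> T \<rho> \<phi> \<longleftrightarrow> \<phi> \<in> S \<rightarrow> T \<and> (\<forall>s \<in> S. \<rho> (\<phi> s) = \<pi> s)"

definition prod_over :: "('s \<Rightarrow> 'm::comm_monoid_mult) \<Rightarrow> ('t \<Rightarrow> 'm) \<Rightarrow> ('s \<times> 't \<Rightarrow> 'm)" where
  "prod_over \<pi> \<rho> = (\<lambda>(s, t). \<pi> s * \<rho> t)"

definition zmod :: "'s set \<Rightarrow> ('s \<Rightarrow> 'm::comm_monoid_mult) \<Rightarrow> ('m, ('m \<times> 's \<Rightarrow>\<^sub>0 int)) hmmod" where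
  "zmod S \<pi> =
     \<lparr>grp = (\<lambda>x. free_Abelian_group {(u, s). s \<in> S \<and> u * \<pi> s = x}),
      act = (\<lambda>x y p. frag_extend (\<lambda>(u, s). frag_of (u * y, s)) p)\<rparr>"

definition zmap :: "('s \<Rightarrow> 't) \<Rightarrow> 'm \<Rightarrow> ('m \<times> 's \<Rightarrow>\<^sub>0 int) \<Rightarrow> ('m \<times> 't \<Rightarrow>\<^sub>0 int)" where
  "zmap \<phi> x p = frag_extend (\<lambda>(u, s). frag_of (u, \<phi> s)) p"

definition zPhi :: "'s set \<Rightarrow> ('s \<Rightarrow> 'm::comm_monoid_mult) \<Rightarrow> 't set \<Rightarrow> ('t \<Rightarrow> 'm) \<Rightarrow> 'm \<Rightarrow>
    ('m \<times> ('s \<times> 't) \<Rightarrow>\<^sub>0 int) \<Rightarrow> ('m \<times> 'm \<times> ('m \<times> 's \<Rightarrow>\<^sub>0 int) \<times> ('m \<times> 't \<Rightarrow>\<^sub>0 int) \<Rightarrow>\<^sub>0 int) set" where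
  "zPhi S \<pi> T \<rho> x p =
     tcls (zmod S \<pi>) (zmod T \<rho>) x
       (frag_extend (\<lambda>(u, (s, t)). frag_of (u * \<pi> s, \<rho> t, frag_of (u, s), frag_of (1, t))) p)"

definition zPsi :: "'m \<Rightarrow> ('m \<times> unit \<Rightarrow>\<^sub>0 int) \<Rightarrow> int" where
  "zPsi x p = (\<Sum>k \<in> Poly_Mapping.keys p. poly_mapping.lookup p k)"

definition unit_set :: "unit set" where "unit_set = {()}"
definition unit_over :: "unit \<Rightarrow> 'm::comm_monoid_mult" where "unit_over = (\<lambda>_. 1)"

end

theory Submission
  imports Defs
begin

(* The structure map sends the generator (u, (s, t)) of Z(S x T) to (u, s) (x) (1, t). Its inverse is
   induced by (u, s) (x) (v, t) |-> (u v, (s, t)), which is additive in both factors and balanced, so it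
   kills every relation of the tensor product. The structure map is onto because the balancing relation
   moves all scalars into the left factor: (u, s) (x) v_*(1, t) = v_*(u, s) (x) (1, t) = (u v, s) (x) (1, t).
   Each coherence condition compares two maps induced by maps on generators; on a generator both sides
   agree up to one balancing relation, or up to the difference between a formal sum and the chosen
   representative of its class, which is itself a relation. Finally Z{e}(x) is free on the single
   generator (x, ()), so taking the coefficient sum is an isomorphism onto the constant module Z. *)

definition frag_subgroup :: "('a \<Rightarrow>\<^sub>0 int) set \<Rightarrow> bool" where
  "frag_subgroup N \<longleftrightarrow> 0 \<in> N \<and> (\<forall>a\<in>N. \<forall>b\<in>N. a - b \<in> N)"

lemma frag_subgroup_0: "frag_subgroup N \<Longrightarrow> 0 \<in> N"
  by (simp add: frag_subgroup_def)

lemma frag_subgroup_diff: "frag_subgroup N \<Longrightarrow> a \<in> N \<Longrightarrow> b \<in> N \<Longrightarrow> a - b \<in> N"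
  by (simp add: frag_subgroup_def)

lemma frag_subgroup_minus: "frag_subgroup N \<Longrightarrow> a \<in> N \<Longrightarrow> - a \<in> N"
  using frag_subgroup_diff[of N 0 a] by (simp add: frag_subgroup_0)

lemma frag_subgroup_add: "frag_subgroup N \<Longrightarrow> a \<in> N \<Longrightarrow> b \<in> N \<Longrightarrow> a + b \<in> N"
  using frag_subgroup_diff[of N a "- b"] frag_subgroup_minus[of N b] by simp

lemma frag_subgroup_trans: "frag_subgroup N \<Longrightarrow> a - b \<in> N \<Longrightarrow> b - c \<in> N \<Longrightarrow> a - c \<in> N"
  using frag_subgroup_add[of N "a - b" "b - c"] by simp

lemma frag_subgroup_zero: "frag_subgroup {0}"
  by (simp add: frag_subgroup_def)

lemma frag_extend_frag_extend:
  "frag_extend f (frag_extend g c) = frag_extend (\<lambda>k. frag_extend f (g k)) c"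
  using subset_UNIV by (induction c rule: frag_induction) (auto simp: frag_extend_diff)

lemma frag_extend_fun_add: "frag_extend (\<lambda>k. f k + g k) c = frag_extend f c + frag_extend g c"
  using subset_UNIV by (induction c rule: frag_induction) (auto simp: frag_extend_diff)

lemma frag_extend_fun_diff: "frag_extend (\<lambda>k. f k - g k) c = frag_extend f c - frag_extend g c"
  using subset_UNIV by (induction c rule: frag_induction) (auto simp: frag_extend_diff)

lemma keys_frag_extend_subset:
  "(\<And>k. k \<in> Poly_Mapping.keys c \<Longrightarrow> Poly_Mapping.keys (f k) \<subseteq> S) \<Longrightarrow> Poly_Mapping.keys (frag_extend f c) \<subseteq> S"
  using keys_frag_extend[of f c] by blast

lemma frag_extend_in_frag_subgroup:
  assumes N: "frag_subgroup N" and f: "\<And>k. k \<in> Poly_Mapping.keys c \<Longrightarrow> f k \<in> N"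
  shows "frag_extend f c \<in> N"
  using subset_refl[of "Poly_Mapping.keys c"]
  by (induction c rule: frag_induction) (auto simp: frag_extend_diff f frag_subgroup_0[OF N] frag_subgroup_diff[OF N])

lemma frag_extend_diff_in_frag_subgroup:
  assumes "frag_subgroup N" and "\<And>k. k \<in> Poly_Mapping.keys c \<Longrightarrow> f k - g k \<in> N"
  shows "frag_extend f c - frag_extend g c \<in> N"
  using frag_extend_in_frag_subgroup[OF assms] by (simp add: frag_extend_fun_diff)

text \<open>This is all the well-definedness arguments use, and unlike \<^const>\<open>hm_module\<close> it is readily
  seen to pass to tensor products.\<close>

definition hm_closed :: "('m::comm_monoid_mult, 'a) hmmod \<Rightarrow> bool" where
  "hm_closed A \<longleftrightarrow>
     (\<forall>z a a'. a \<in> carrier (grp A z) \<longrightarrow> a' \<in> carrier (grp A z) \<longrightarrow> a \<otimes>\<^bsub>grp A z\<^esub> a' \<in> carrier (grp A z)) \<and>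
     (\<forall>z y a. a \<in> carrier (grp A z) \<longrightarrow> act A z y a \<in> carrier (grp A (z * y)))"

lemma hm_closed_mult:
  "hm_closed A \<Longrightarrow> a \<in> carrier (grp A z) \<Longrightarrow> a' \<in> carrier (grp A z) \<Longrightarrow> a \<otimes>\<^bsub>grp A z\<^esub> a' \<in> carrier (grp A z)"
  by (simp add: hm_closed_def)

lemma hm_closed_act: "hm_closed A \<Longrightarrow> a \<in> carrier (grp A z) \<Longrightarrow> act A z y a \<in> carrier (grp A (z * y))"
  by (simp add: hm_closed_def)

lemma hm_module_hm_closed: "hm_module A \<Longrightarrow> hm_closed A"
  unfolding hm_module_def hm_closed_def comm_group_def by (meson hom_in_carrier group.is_monoid monoid.m_closed)

lemma hm_module_act_mult:
  "hm_module A \<Longrightarrow> a \<in> carrier (grp A z) \<Longrightarrow> a' \<in> carrier (grp A z) \<Longrightarrow>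
     act A z y (a \<otimes>\<^bsub>grp A z\<^esub> a') = act A z y a \<otimes>\<^bsub>grp A (z * y)\<^esub> act A z y a'"
  unfolding hm_module_def by (meson hom_mult)

lemma hm_module_act_act:
  "hm_module A \<Longrightarrow> a \<in> carrier (grp A x) \<Longrightarrow> act A (x * y) z (act A x y a) = act A x (y * z) a"
  by (simp add: hm_module_def)

lemma hm_hom_closed: "hm_hom A A' f \<Longrightarrow> a \<in> carrier (grp A z) \<Longrightarrow> f z a \<in> carrier (grp A' z)"
  unfolding hm_hom_def by (meson hom_in_carrier)

lemma hm_hom_mult:
  "hm_hom A A' f \<Longrightarrow> a \<in> carrier (grp A z) \<Longrightarrow> a' \<in> carrier (grp A z) \<Longrightarrow>
     f z (a \<otimes>\<^bsub>grp A z\<^esub> a') = f z a \<otimes>\<^bsub>grp A' z\<^esub> f z a'"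
  unfolding hm_hom_def by (meson hom_mult)

lemma hm_hom_act: "hm_hom A A' f \<Longrightarrow> a \<in> carrier (grp A z) \<Longrightarrow> f (z * y) (act A z y a) = act A' z y (f z a)"
  by (simp add: hm_hom_def)

lemma hm_hom_id: "hm_hom A A (\<lambda>y q. q)"
  by (simp add: hm_hom_def hom_def)

section \<open>The tensor product\<close>

lemma tgensI: "z * t = x \<Longrightarrow> a \<in> carrier (grp A z) \<Longrightarrow> b \<in> carrier (grp B t) \<Longrightarrow> (z, t, a, b) \<in> tgens A B x"
  by (simp add: tgens_def)

lemma tgensE:
  assumes "k \<in> tgens A B x"
  obtains z t a b where "k = (z, t, a, b)" "z * t = x" "a \<in> carrier (grp A z)" "b \<in> carrier (grp B t)"
  using assms by (cases k) (auto simp: tgens_def)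

lemma carrier_tfree: "q \<in> carrier (tfree A B x) \<longleftrightarrow> Poly_Mapping.keys q \<subseteq> tgens A B x"
  by (simp add: tfree_def)

lemma trels_add_left:
  "z * t = x \<Longrightarrow> a \<in> carrier (grp A z) \<Longrightarrow> a' \<in> carrier (grp A z) \<Longrightarrow> b \<in> carrier (grp B t) \<Longrightarrow>
     frag_of (z, t, a \<otimes>\<^bsub>grp A z\<^esub> a', b) - frag_of (z, t, a, b) - frag_of (z, t, a', b) \<in> trels A B x"
  unfolding trels_def trelgens_def by (rule generate.incl) blast

lemma trels_add_right:
  "z * t = x \<Longrightarrow> a \<in> carrier (grp A z) \<Longrightarrow> b \<in> carrier (grp B t) \<Longrightarrow> b' \<in> carrier (grp B t) \<Longrightarrow>
     frag_of (z, t, a, b \<otimes>\<^bsub>grp B t\<^esub> b') - frag_of (z, t, a, b) - frag_of (z, t, a, b') \<in> trels A B x"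
  unfolding trels_def trelgens_def by (rule generate.incl) blast

lemma trels_balanced:
  "u * v * w = x \<Longrightarrow> a \<in> carrier (grp A v) \<Longrightarrow> b \<in> carrier (grp B w) \<Longrightarrow>
     frag_of (v * u, w, act A v u a, b) - frag_of (v, u * w, a, act B w u b) \<in> trels A B x"
  unfolding trels_def trelgens_def by (rule generate.incl) blast

lemma tcls_eq_image: "tcls A B x q = (\<lambda>r. r + q) ` trels A B x"
  by (auto simp: tcls_def r_coset_def tfree_def)

lemma carrier_tensor: "carrier (grp (tensor A B) x) = tcls A B x ` carrier (tfree A B x)"
  by (simp add: tensor_def carrier_FactGroup tcls_def image_def)

context
  fixes A :: "('m::comm_monoid_mult, 'a) hmmod" and B :: "('m, 'b) hmmod"
  assumes A: "hm_closed A" and B: "hm_closed B"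
begin

lemma trelgens_subset_carrier: "trelgens A B x \<subseteq> carrier (tfree A B x)"
proof -
  have diff: "Poly_Mapping.keys (p - q) \<subseteq> S" if "Poly_Mapping.keys p \<subseteq> S" "Poly_Mapping.keys q \<subseteq> S"
    for p q :: "'k \<Rightarrow>\<^sub>0 int" and S
    using that keys_diff[of p q] by blast
  have "Poly_Mapping.keys g \<subseteq> tgens A B x" if "g \<in> trelgens A B x" for g
    using that unfolding trelgens_def
  proof (elim UnE CollectE exE conjE)
    fix z t a a' b
    assume "g = frag_of (z, t, a \<otimes>\<^bsub>grp A z\<^esub> a', b) - frag_of (z, t, a, b) - frag_of (z, t, a', b)"
      and "z * t = x" "a \<in> carrier (grp A z)" "a' \<in> carrier (grp A z)" "b \<in> carrier (grp B t)"
    then show ?thesis by (simp add: diff keys_frag_of tgensI hm_closed_mult[OF A])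
  next
    fix z t a b b'
    assume "g = frag_of (z, t, a, b \<otimes>\<^bsub>grp B t\<^esub> b') - frag_of (z, t, a, b) - frag_of (z, t, a, b')"
      and "z * t = x" "a \<in> carrier (grp A z)" "b \<in> carrier (grp B t)" "b' \<in> carrier (grp B t)"
    then show ?thesis by (simp add: diff keys_frag_of tgensI hm_closed_mult[OF B])
  next
    fix u v w a b
    assume g: "g = frag_of (v * u, w, act A v u a, b) - frag_of (v, u * w, a, act B w u b)"
      and x: "u * v * w = x" and a: "a \<in> carrier (grp A v)" and b: "b \<in> carrier (grp B w)"
    have "(v * u, w, act A v u a, b) \<in> tgens A B x"
      using x hm_closed_act[OF A a] b by (intro tgensI) (simp_all add: ac_simps)
    moreover have "(v, u * w, a, act B w u b) \<in> tgens A B x"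
      using x hm_closed_act[OF B b, of u] a by (intro tgensI) (simp_all add: ac_simps)
    ultimately show ?thesis by (simp add: g diff keys_frag_of)
  qed
  then show ?thesis by (auto simp: carrier_tfree)
qed

lemma trels_subgroup: "subgroup (trels A B x) (tfree A B x)"
  unfolding trels_def tfree_def
  by (rule group.generate_is_subgroup[OF group_free_Abelian_group trelgens_subset_carrier[unfolded tfree_def]])

lemma keys_trels: "r \<in> trels A B x \<Longrightarrow> Poly_Mapping.keys r \<subseteq> tgens A B x"
  using subgroup.mem_carrier[OF trels_subgroup] by (force simp: carrier_tfree)

lemma frag_subgroup_trels: "frag_subgroup (trels A B x)"
  unfolding frag_subgroup_def
proof (intro conjI ballI)
  show "0 \<in> trels A B x" using subgroup.one_closed[OF trels_subgroup] by (simp add: tfree_def)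
next
  fix a b assume a: "a \<in> trels A B x" and b: "b \<in> trels A B x"
  have "inv\<^bsub>tfree A B x\<^esub> b = - b" using keys_trels[OF b] by (simp add: tfree_def)
  then show "a - b \<in> trels A B x"
    using subgroup.m_closed[OF trels_subgroup a subgroup.m_inv_closed[OF trels_subgroup b]]
    by (simp add: tfree_def)
qed

lemma frag_extend_trels:
  assumes N: "frag_subgroup N"
    and add_left: "\<And>z t a a' b. z * t = x \<Longrightarrow> a \<in> carrier (grp A z) \<Longrightarrow> a' \<in> carrier (grp A z) \<Longrightarrow>
           b \<in> carrier (grp B t) \<Longrightarrow> h (z, t, a \<otimes>\<^bsub>grp A z\<^esub> a', b) - h (z, t, a, b) - h (z, t, a', b) \<in> N"
    and add_right: "\<And>z t a b b'. z * t = x \<Longrightarrow> a \<in> carrier (grp A z) \<Longrightarrow> b \<in> carrier (grp B t) \<Longrightarrow>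
           b' \<in> carrier (grp B t) \<Longrightarrow> h (z, t, a, b \<otimes>\<^bsub>grp B t\<^esub> b') - h (z, t, a, b) - h (z, t, a, b') \<in> N"
    and balanced: "\<And>u v w a b. u * v * w = x \<Longrightarrow> a \<in> carrier (grp A v) \<Longrightarrow> b \<in> carrier (grp B w) \<Longrightarrow>
           h (v * u, w, act A v u a, b) - h (v, u * w, a, act B w u b) \<in> N"
    and r: "r \<in> trels A B x"
  shows "frag_extend h r \<in> N"
proof -
  have gens: "frag_extend h g \<in> N" if "g \<in> trelgens A B x" for g
    using that unfolding trelgens_def
    by (elim UnE CollectE exE conjE) (simp_all add: frag_extend_diff add_left add_right balanced)
  from r[unfolded trels_def] show ?thesis
  proof (induction r rule: generate.induct)
    case one
    then show ?case using N by (simp add: tfree_def frag_subgroup_0)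
  next
    case (incl g)
    then show ?case by (rule gens)
  next
    case (inv g)
    then have "inv\<^bsub>tfree A B x\<^esub> g = - g"
      using trelgens_subset_carrier[of x] by (auto simp: tfree_def)
    then show ?case using inv gens N by (simp add: frag_extend_minus frag_subgroup_minus)
  next
    case (eng a b)
    then show ?case using N by (simp add: tfree_def frag_extend_add frag_subgroup_add)
  qed
qed

lemma tcls_eq_iff: "tcls A B x q = tcls A B x q' \<longleftrightarrow> q - q' \<in> trels A B x"
proof
  assume "tcls A B x q = tcls A B x q'"
  moreover have "q \<in> tcls A B x q"
    using frag_subgroup_0[OF frag_subgroup_trels] by (force simp: tcls_eq_image)
  ultimately show "q - q' \<in> trels A B x" by (auto simp: tcls_eq_image)
next
  assume d: "q - q' \<in> trels A B x"
  note N = frag_subgroup_trels[of x]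
  show "tcls A B x q = tcls A B x q'"
    unfolding tcls_eq_image
  proof (intro equalityI image_subsetI)
    fix r assume "r \<in> trels A B x"
    then show "r + q \<in> (\<lambda>r. r + q') ` trels A B x"
      using frag_subgroup_add[OF N _ d] by (intro image_eqI[of _ _ "r + (q - q')"]) auto
  next
    fix r assume "r \<in> trels A B x"
    then show "r + q' \<in> (\<lambda>r. r + q) ` trels A B x"
      using frag_subgroup_diff[OF N _ d] by (intro image_eqI[of _ _ "r - (q - q')"]) auto
  qed
qed

lemma rep_tcls: "rep (tcls A B x q) - q \<in> trels A B x"
proof -
  have "q \<in> tcls A B x q"
    using frag_subgroup_0[OF frag_subgroup_trels] by (force simp: tcls_eq_image)
  then have "rep (tcls A B x q) \<in> tcls A B x q" unfolding rep_def by (rule someI)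
  then show ?thesis by (auto simp: tcls_eq_image)
qed

lemma tcls_rep: "tcls A B x (rep (tcls A B x q)) = tcls A B x q"
  using rep_tcls tcls_eq_iff by blast

lemma keys_rep_tcls:
  assumes "Poly_Mapping.keys q \<subseteq> tgens A B x"
  shows "Poly_Mapping.keys (rep (tcls A B x q)) \<subseteq> tgens A B x"
  using keys_add[of "rep (tcls A B x q) - q" q] keys_trels[OF rep_tcls, of x q] assms by auto

lemma mult_tensor: "tcls A B x p \<otimes>\<^bsub>grp (tensor A B) x\<^esub> tcls A B x q = tcls A B x (p + q)"
proof -
  note N = frag_subgroup_trels[of x]
  have "(\<Union>a\<in>trels A B x. \<Union>b\<in>trels A B x. {a + p + (b + q)}) = (\<lambda>r. r + (p + q)) ` trels A B x"
  proof (intro equalityI subsetI)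
    fix y assume "y \<in> (\<Union>a\<in>trels A B x. \<Union>b\<in>trels A B x. {a + p + (b + q)})"
    then obtain a b where "a \<in> trels A B x" "b \<in> trels A B x" "y = a + p + (b + q)" by auto
    then show "y \<in> (\<lambda>r. r + (p + q)) ` trels A B x"
      by (intro image_eqI[of _ _ "a + b"]) (auto intro: frag_subgroup_add[OF N])
  next
    fix y assume "y \<in> (\<lambda>r. r + (p + q)) ` trels A B x"
    then obtain a where "a \<in> trels A B x" "y = a + (p + q)" by auto
    then show "y \<in> (\<Union>a\<in>trels A B x. \<Union>b\<in>trels A B x. {a + p + (b + q)})"
      using frag_subgroup_0[OF N] by (intro UN_I[of a] UN_I[of 0]) auto
  qed
  then show ?thesis
    unfolding tensor_def FactGroup_def set_mult_def by (simp add: tcls_eq_image tfree_def)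
qed

lemma carrier_tensorE:
  assumes "c \<in> carrier (grp (tensor A B) x)"
  obtains "Poly_Mapping.keys (rep c) \<subseteq> tgens A B x" "c = tcls A B x (rep c)"
proof -
  obtain q where "q \<in> carrier (tfree A B x)" "c = tcls A B x q"
    using assms by (auto simp: carrier_tensor)
  then show ?thesis using that keys_rep_tcls tcls_rep by (simp add: carrier_tfree)
qed

lemma frag_extend_rep_tcls:
  assumes "frag_subgroup N" "\<And>r. r \<in> trels A B x \<Longrightarrow> frag_extend h r \<in> N"
  shows "frag_extend h (rep (tcls A B x q)) - frag_extend h q \<in> N"
  using assms(2)[OF rep_tcls] by (simp add: frag_extend_diff)

lemma frag_extend_rep_tcls_eq:
  assumes "\<And>r. r \<in> trels A B x \<Longrightarrow> frag_extend h r = 0"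
  shows "frag_extend h (rep (tcls A B x q)) = frag_extend h q"
  using assms[OF rep_tcls] by (simp add: frag_extend_diff)

end

lemma tcls_frag_extend_rep:
  assumes "hm_closed A" "hm_closed B" "hm_closed A'" "hm_closed B'"
    and "\<And>r. r \<in> trels A B x \<Longrightarrow> frag_extend h r \<in> trels A' B' x'"
  shows "tcls A' B' x' (frag_extend h (rep (tcls A B x q))) = tcls A' B' x' (frag_extend h q)"
  using frag_extend_rep_tcls[OF assms(1,2) frag_subgroup_trels[OF assms(3,4)] assms(5)]
  by (simp add: tcls_eq_iff[OF assms(3,4)])

definition tensor_act_gen :: "('m::comm_monoid_mult, 'a) hmmod \<Rightarrow> 'm \<Rightarrow> 'm \<times> 'm \<times> 'a \<times> 'b \<Rightarrow> ('m \<times> 'm \<times> 'a \<times> 'b \<Rightarrow>\<^sub>0 int)" where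
  "tensor_act_gen A y = (\<lambda>(z, t, a, b). frag_of (z * y, t, act A z y a, b))"

lemma act_tensor: "act (tensor A B) x y c = tcls A B (x * y) (frag_extend (tensor_act_gen A y) (rep c))"
  by (simp add: tensor_def tensor_act_gen_def)

lemma tensor_act_gen_trels:
  assumes A: "hm_module A" and B: "hm_closed B" and r: "r \<in> trels A B x"
  shows "frag_extend (tensor_act_gen A y) r \<in> trels A B (x * y)"
proof (rule frag_extend_trels[OF hm_module_hm_closed[OF A] B frag_subgroup_trels[OF hm_module_hm_closed[OF A] B] _ _ _ r])
  note A' = hm_module_hm_closed[OF A]
  fix z t a a' b
  assume "z * t = x" "a \<in> carrier (grp A z)" "a' \<in> carrier (grp A z)" "b \<in> carrier (grp B t)"
  moreover have "z * y * t = x * y" if "z * t = x" using that by (auto simp: ac_simps)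
  ultimately show "tensor_act_gen A y (z, t, a \<otimes>\<^bsub>grp A z\<^esub> a', b) - tensor_act_gen A y (z, t, a, b)
      - tensor_act_gen A y (z, t, a', b) \<in> trels A B (x * y)"
    by (simp add: tensor_act_gen_def hm_module_act_mult[OF A] trels_add_left hm_closed_act[OF A'])
next
  note A' = hm_module_hm_closed[OF A]
  fix z t a b b'
  assume "z * t = x" "a \<in> carrier (grp A z)" "b \<in> carrier (grp B t)" "b' \<in> carrier (grp B t)"
  moreover have "z * y * t = x * y" if "z * t = x" using that by (auto simp: ac_simps)
  ultimately show "tensor_act_gen A y (z, t, a, b \<otimes>\<^bsub>grp B t\<^esub> b') - tensor_act_gen A y (z, t, a, b)
      - tensor_act_gen A y (z, t, a, b') \<in> trels A B (x * y)"
    by (simp add: tensor_act_gen_def trels_add_right hm_closed_act[OF A'])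
next
  note A' = hm_module_hm_closed[OF A]
  fix u v w a b
  assume x: "u * v * w = x" and a: "a \<in> carrier (grp A v)" and b: "b \<in> carrier (grp B w)"
  have "act A (v * u) y (act A v u a) = act A (v * y) u (act A v y a)"
    using hm_module_act_act[OF A a, of u y] hm_module_act_act[OF A a, of y u] by (simp add: ac_simps)
  moreover have "u * (v * y) * w = x * y" using x by (auto simp: ac_simps)
  ultimately show "tensor_act_gen A y (v * u, w, act A v u a, b) - tensor_act_gen A y (v, u * w, a, act B w u b)
      \<in> trels A B (x * y)"
    using trels_balanced[of u "v * y" w "x * y" "act A v y a" A b B] hm_closed_act[OF A' a, of y] b
    by (simp add: tensor_act_gen_def ac_simps)
qed

lemma act_tensor_tcls:
  assumes "hm_module A" "hm_closed B"
  shows "act (tensor A B) x y (tcls A B x q) = tcls A B (x * y) (frag_extend (tensor_act_gen A y) q)"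
  unfolding act_tensor using hm_module_hm_closed[OF assms(1)] assms(2)
  by (intro tcls_frag_extend_rep tensor_act_gen_trels[OF assms])

lemma hm_closed_tensor:
  assumes A: "hm_module A" and B: "hm_closed B"
  shows "hm_closed (tensor A B)"
  unfolding hm_closed_def
proof (intro conjI allI impI)
  note A' = hm_module_hm_closed[OF A]
  fix z c c' assume "c \<in> carrier (grp (tensor A B) z)" "c' \<in> carrier (grp (tensor A B) z)"
  then obtain q q' where "q \<in> carrier (tfree A B z)" "q' \<in> carrier (tfree A B z)"
    "c = tcls A B z q" "c' = tcls A B z q'"
    by (auto simp: carrier_tensor)
  moreover have "q + q' \<in> carrier (tfree A B z)" if "q \<in> carrier (tfree A B z)" "q' \<in> carrier (tfree A B z)"
    using that keys_add[of q q'] by (auto simp: carrier_tfree)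
  ultimately show "c \<otimes>\<^bsub>grp (tensor A B) z\<^esub> c' \<in> carrier (grp (tensor A B) z)"
    by (simp add: mult_tensor[OF A' B] carrier_tensor)
next
  note A' = hm_module_hm_closed[OF A]
  fix z y c assume "c \<in> carrier (grp (tensor A B) z)"
  then have "Poly_Mapping.keys (rep c) \<subseteq> tgens A B z" by (rule carrier_tensorE[OF A' B])
  then have "frag_extend (tensor_act_gen A y) (rep c) \<in> carrier (tfree A B (z * y))"
    unfolding carrier_tfree
    by (intro keys_frag_extend_subset)
       (auto elim!: tgensE simp: tensor_act_gen_def keys_frag_of ac_simps intro!: tgensI hm_closed_act[OF A'])
  then show "act (tensor A B) z y c \<in> carrier (grp (tensor A B) (z * y))"
    unfolding act_tensor carrier_tensor by (rule imageI)
qed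

definition tensor_hom_gen :: "('m \<Rightarrow> 'a \<Rightarrow> 'a2) \<Rightarrow> ('m \<Rightarrow> 'b \<Rightarrow> 'b2) \<Rightarrow> 'm \<times> 'm \<times> 'a \<times> 'b \<Rightarrow> ('m \<times> 'm \<times> 'a2 \<times> 'b2 \<Rightarrow>\<^sub>0 int)" where
  "tensor_hom_gen f g = (\<lambda>(z, t, a, b). frag_of (z, t, f z a, g t b))"

lemma tensor_hom_gen_trels:
  assumes A: "hm_closed A" and B: "hm_closed B" and A': "hm_closed A'" and B': "hm_closed B'"
    and f: "hm_hom A A' f" and g: "hm_hom B B' g" and r: "r \<in> trels A B x"
  shows "frag_extend (tensor_hom_gen f g) r \<in> trels A' B' x"
proof (rule frag_extend_trels[OF A B frag_subgroup_trels[OF A' B'] _ _ _ r])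
  fix z t a a' b
  assume "z * t = x" "a \<in> carrier (grp A z)" "a' \<in> carrier (grp A z)" "b \<in> carrier (grp B t)"
  then show "tensor_hom_gen f g (z, t, a \<otimes>\<^bsub>grp A z\<^esub> a', b) - tensor_hom_gen f g (z, t, a, b)
      - tensor_hom_gen f g (z, t, a', b) \<in> trels A' B' x"
    by (simp add: tensor_hom_gen_def hm_hom_mult[OF f] trels_add_left hm_hom_closed[OF f] hm_hom_closed[OF g])
next
  fix z t a b b'
  assume "z * t = x" "a \<in> carrier (grp A z)" "b \<in> carrier (grp B t)" "b' \<in> carrier (grp B t)"
  then show "tensor_hom_gen f g (z, t, a, b \<otimes>\<^bsub>grp B t\<^esub> b') - tensor_hom_gen f g (z, t, a, b)
      - tensor_hom_gen f g (z, t, a, b') \<in> trels A' B' x"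
    by (simp add: tensor_hom_gen_def hm_hom_mult[OF g] trels_add_right hm_hom_closed[OF f] hm_hom_closed[OF g])
next
  fix u v w a b
  assume "u * v * w = x" "a \<in> carrier (grp A v)" "b \<in> carrier (grp B w)"
  then show "tensor_hom_gen f g (v * u, w, act A v u a, b) - tensor_hom_gen f g (v, u * w, a, act B w u b)
      \<in> trels A' B' x"
    using hm_hom_act[OF g, of b w u] trels_balanced[of u v w x "f v a" A' "g w b" B']
    by (simp add: tensor_hom_gen_def hm_hom_act[OF f] hm_hom_closed[OF f] hm_hom_closed[OF g] mult.commute[of u w])
qed

lemma tensor_hom_tcls:
  assumes "hm_closed A" "hm_closed B" "hm_closed A'" "hm_closed B'" "hm_hom A A' f" "hm_hom B B' g"
  shows "tensor_hom A' B' f g x (tcls A B x q) = tcls A' B' x (frag_extend (tensor_hom_gen f g) q)"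
  unfolding tensor_hom_def tensor_hom_gen_def[symmetric]
  by (rule tcls_frag_extend_rep[OF assms(1-4)]) (rule tensor_hom_gen_trels[OF assms])

lemma keys_tensor_hom_gen:
  assumes f: "hm_hom A A' f" and g: "hm_hom B B' g" and q: "Poly_Mapping.keys q \<subseteq> tgens A B x"
  shows "Poly_Mapping.keys (frag_extend (tensor_hom_gen f g) q) \<subseteq> tgens A' B' x"
  using q by (intro keys_frag_extend_subset)
    (auto elim!: tgensE simp: tensor_hom_gen_def keys_frag_of intro!: tgensI hm_hom_closed[OF f] hm_hom_closed[OF g])

definition tswap_gen :: "'m \<times> 'm \<times> 'a \<times> 'b \<Rightarrow> ('m \<times> 'm \<times> 'b \<times> 'a \<Rightarrow>\<^sub>0 int)" where
  "tswap_gen = (\<lambda>(z, t, a, b). frag_of (t, z, b, a))"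

lemma tswap_gen_trels:
  assumes A: "hm_closed A" and B: "hm_closed B" and r: "r \<in> trels A B x"
  shows "frag_extend tswap_gen r \<in> trels B A x"
proof (rule frag_extend_trels[OF A B frag_subgroup_trels[OF B A] _ _ _ r])
  fix z t a a' b
  assume "z * t = x" "a \<in> carrier (grp A z)" "a' \<in> carrier (grp A z)" "b \<in> carrier (grp B t)"
  then show "tswap_gen (z, t, a \<otimes>\<^bsub>grp A z\<^esub> a', b) - tswap_gen (z, t, a, b) - tswap_gen (z, t, a', b) \<in> trels B A x"
    by (simp add: tswap_gen_def trels_add_right mult.commute)
next
  fix z t a b b'
  assume "z * t = x" "a \<in> carrier (grp A z)" "b \<in> carrier (grp B t)" "b' \<in> carrier (grp B t)"
  then show "tswap_gen (z, t, a, b \<otimes>\<^bsub>grp B t\<^esub> b') - tswap_gen (z, t, a, b) - tswap_gen (z, t, a, b') \<in> trels B A x"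
    by (simp add: tswap_gen_def trels_add_left mult.commute)
next
  fix u v w a b
  assume "u * v * w = x" "a \<in> carrier (grp A v)" "b \<in> carrier (grp B w)"
  then have "frag_of (w * u, v, act B w u b, a) - frag_of (w, u * v, b, act A v u a) \<in> trels B A x"
    by (intro trels_balanced) (simp_all add: ac_simps)
  then show "tswap_gen (v * u, w, act A v u a, b) - tswap_gen (v, u * w, a, act B w u b) \<in> trels B A x"
    using frag_subgroup_minus[OF frag_subgroup_trels[OF B A]] by (fastforce simp: tswap_gen_def mult.commute)
qed

lemma tswap_tcls:
  assumes "hm_closed A" "hm_closed B"
  shows "tswap A B x (tcls A B x q) = tcls B A x (frag_extend tswap_gen q)"
  unfolding tswap_def tswap_gen_def[symmetric]
  by (rule tcls_frag_extend_rep[OF assms assms(2,1)]) (rule tswap_gen_trels[OF assms])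

section \<open>The associator\<close>

definition tassoc_inner_gen :: "('m::comm_monoid_mult, 'b) hmmod \<Rightarrow> ('m, 'c) hmmod \<Rightarrow> 'm \<Rightarrow> 'c \<Rightarrow> 'm \<times> 'm \<times> 'a \<times> 'b \<Rightarrow>
    ('m \<times> 'm \<times> 'a \<times> ('m \<times> 'm \<times> 'b \<times> 'c \<Rightarrow>\<^sub>0 int) set \<Rightarrow>\<^sub>0 int)" where
  "tassoc_inner_gen B C t w = (\<lambda>(z, t', a, b). frag_of (z, t' * t, a, tcls B C (t' * t) (frag_of (t', t, b, w))))"

definition tassoc_gen :: "('m::comm_monoid_mult, 'b) hmmod \<Rightarrow> ('m, 'c) hmmod \<Rightarrow>
    'm \<times> 'm \<times> ('m \<times> 'm \<times> 'a \<times> 'b \<Rightarrow>\<^sub>0 int) set \<times> 'c \<Rightarrow>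
    ('m \<times> 'm \<times> 'a \<times> ('m \<times> 'm \<times> 'b \<times> 'c \<Rightarrow>\<^sub>0 int) set \<Rightarrow>\<^sub>0 int)" where
  "tassoc_gen B C = (\<lambda>(z, t, d, w). frag_extend (tassoc_inner_gen B C t w) (rep d))"

lemma tassoc_eq: "tassoc A B C x c = tcls A (tensor B C) x (frag_extend (tassoc_gen B C) (rep c))"
  unfolding tassoc_def tassoc_gen_def tassoc_inner_gen_def ..

context
  fixes B :: "('m::comm_monoid_mult, 'b) hmmod" and C :: "('m, 'c) hmmod"
  assumes B: "hm_closed B" and C: "hm_closed C"
begin

lemma tcls_frag_of_carrier:
  "b \<in> carrier (grp B t) \<Longrightarrow> w \<in> carrier (grp C t') \<Longrightarrow>
     tcls B C (t * t') (frag_of (t, t', b, w)) \<in> carrier (grp (tensor B C) (t * t'))"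
  unfolding carrier_tensor by (rule imageI) (simp add: carrier_tfree keys_frag_of tgensI)

lemma tcls_frag_of_mult_left:
  "b \<in> carrier (grp B t) \<Longrightarrow> b' \<in> carrier (grp B t) \<Longrightarrow> w \<in> carrier (grp C t') \<Longrightarrow>
     tcls B C (t * t') (frag_of (t, t', b \<otimes>\<^bsub>grp B t\<^esub> b', w)) =
     tcls B C (t * t') (frag_of (t, t', b, w)) \<otimes>\<^bsub>grp (tensor B C) (t * t')\<^esub> tcls B C (t * t') (frag_of (t, t', b', w))"
  unfolding mult_tensor[OF B C] tcls_eq_iff[OF B C] by (simp add: trels_add_left diff_diff_eq[symmetric])

lemma tcls_frag_of_mult_right:
  "b \<in> carrier (grp B t) \<Longrightarrow> w \<in> carrier (grp C t') \<Longrightarrow> w' \<in> carrier (grp C t') \<Longrightarrow>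
     tcls B C (t * t') (frag_of (t, t', b, w \<otimes>\<^bsub>grp C t'\<^esub> w')) =
     tcls B C (t * t') (frag_of (t, t', b, w)) \<otimes>\<^bsub>grp (tensor B C) (t * t')\<^esub> tcls B C (t * t') (frag_of (t, t', b, w'))"
  unfolding mult_tensor[OF B C] tcls_eq_iff[OF B C] by (simp add: trels_add_right diff_diff_eq[symmetric])

lemma tcls_frag_of_balanced:
  "u * v * w = x \<Longrightarrow> b \<in> carrier (grp B v) \<Longrightarrow> c \<in> carrier (grp C w) \<Longrightarrow>
     tcls B C x (frag_of (v * u, w, act B v u b, c)) = tcls B C x (frag_of (v, u * w, b, act C w u c))"
  unfolding tcls_eq_iff[OF B C] by (rule trels_balanced)

end

context
  fixes A :: "('m::comm_monoid_mult, 'a) hmmod" and B :: "('m, 'b) hmmod" and C :: "('m, 'c) hmmod"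
  assumes A: "hm_module A" and B: "hm_module B" and C: "hm_closed C"
begin

lemma act_tensor_frag_of:
  assumes "b \<in> carrier (grp B t)"
  shows "act (tensor B C) (t * t') u (tcls B C (t * t') (frag_of (t, t', b, w)))
     = tcls B C (t * t' * u) (frag_of (t * u, t', act B t u b, w))"
  by (simp add: act_tensor_tcls[OF B C] tensor_act_gen_def)

lemma tassoc_inner_gen_trels:
  assumes w: "w \<in> carrier (grp C t)" and r: "r \<in> trels A B z"
  shows "frag_extend (tassoc_inner_gen B C t w) r \<in> trels A (tensor B C) (z * t)"
proof (rule frag_extend_trels[OF hm_module_hm_closed[OF A] hm_module_hm_closed[OF B] frag_subgroup_trels[OF hm_module_hm_closed[OF A] hm_closed_tensor[OF B C]] _ _ _ r])
  fix z' t' a a' b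
  assume "z' * t' = z" "a \<in> carrier (grp A z')" "a' \<in> carrier (grp A z')" and b: "b \<in> carrier (grp B t')"
  with tcls_frag_of_carrier[OF hm_module_hm_closed[OF B] C b w]
  have "frag_of (z', t' * t, a \<otimes>\<^bsub>grp A z'\<^esub> a', tcls B C (t' * t) (frag_of (t', t, b, w)))
      - frag_of (z', t' * t, a, tcls B C (t' * t) (frag_of (t', t, b, w)))
      - frag_of (z', t' * t, a', tcls B C (t' * t) (frag_of (t', t, b, w))) \<in> trels A (tensor B C) (z * t)"
    by (intro trels_add_left) (auto simp: mult.assoc)
  then show "tassoc_inner_gen B C t w (z', t', a \<otimes>\<^bsub>grp A z'\<^esub> a', b) - tassoc_inner_gen B C t w (z', t', a, b)
      - tassoc_inner_gen B C t w (z', t', a', b) \<in> trels A (tensor B C) (z * t)"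
    by (simp add: tassoc_inner_gen_def)
next
  fix z' t' a b b'
  assume "z' * t' = z" "a \<in> carrier (grp A z')" and b: "b \<in> carrier (grp B t')" and b': "b' \<in> carrier (grp B t')"
  with tcls_frag_of_carrier[OF hm_module_hm_closed[OF B] C b w] tcls_frag_of_carrier[OF hm_module_hm_closed[OF B] C b' w]
  have "frag_of (z', t' * t, a, tcls B C (t' * t) (frag_of (t', t, b, w)) \<otimes>\<^bsub>grp (tensor B C) (t' * t)\<^esub>
        tcls B C (t' * t) (frag_of (t', t, b', w)))
      - frag_of (z', t' * t, a, tcls B C (t' * t) (frag_of (t', t, b, w)))
      - frag_of (z', t' * t, a, tcls B C (t' * t) (frag_of (t', t, b', w))) \<in> trels A (tensor B C) (z * t)"
    by (intro trels_add_right) (auto simp: mult.assoc)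
  then show "tassoc_inner_gen B C t w (z', t', a, b \<otimes>\<^bsub>grp B t'\<^esub> b') - tassoc_inner_gen B C t w (z', t', a, b)
      - tassoc_inner_gen B C t w (z', t', a, b') \<in> trels A (tensor B C) (z * t)"
    by (simp add: tassoc_inner_gen_def tcls_frag_of_mult_left[OF hm_module_hm_closed[OF B] C b b' w])
next
  fix u v w' a b
  assume x: "u * v * w' = z" and a: "a \<in> carrier (grp A v)" and b: "b \<in> carrier (grp B w')"
  have "frag_of (v * u, w' * t, act A v u a, tcls B C (w' * t) (frag_of (w', t, b, w)))
      - frag_of (v, u * (w' * t), a, act (tensor B C) (w' * t) u (tcls B C (w' * t) (frag_of (w', t, b, w))))
      \<in> trels A (tensor B C) (z * t)"
    using x a tcls_frag_of_carrier[OF hm_module_hm_closed[OF B] C b w] by (intro trels_balanced) (auto simp: ac_simps)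
  from this[unfolded act_tensor_frag_of[OF b]]
  show "tassoc_inner_gen B C t w (v * u, w', act A v u a, b) - tassoc_inner_gen B C t w (v, u * w', a, act B w' u b)
      \<in> trels A (tensor B C) (z * t)"
    by (simp add: tassoc_inner_gen_def ac_simps)
qed

lemma tassoc_inner_gen_mult:
  assumes q: "Poly_Mapping.keys q \<subseteq> tgens A B z" and x: "z * t = x"
    and w: "w \<in> carrier (grp C t)" and w': "w' \<in> carrier (grp C t)"
  shows "frag_extend (tassoc_inner_gen B C t (w \<otimes>\<^bsub>grp C t\<^esub> w')) q - frag_extend (tassoc_inner_gen B C t w) q
      - frag_extend (tassoc_inner_gen B C t w') q \<in> trels A (tensor B C) x"
proof -
  have "tassoc_inner_gen B C t (w \<otimes>\<^bsub>grp C t\<^esub> w') k - tassoc_inner_gen B C t w k - tassoc_inner_gen B C t w' k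
      \<in> trels A (tensor B C) x" if "k \<in> tgens A B z" for k
    using that
  proof (cases rule: tgensE)
    case (1 z' t' a b)
    then show ?thesis
      unfolding 1(1) tassoc_inner_gen_def prod.case tcls_frag_of_mult_right[OF hm_module_hm_closed[OF B] C 1(4) w w']
      by (intro trels_add_right tcls_frag_of_carrier[OF hm_module_hm_closed[OF B] C] w w') (use x in \<open>auto simp: mult.assoc\<close>)
  qed
  then have "frag_extend (\<lambda>k. tassoc_inner_gen B C t (w \<otimes>\<^bsub>grp C t\<^esub> w') k - tassoc_inner_gen B C t w k
      - tassoc_inner_gen B C t w' k) q \<in> trels A (tensor B C) x"
    using q by (intro frag_extend_in_frag_subgroup[OF frag_subgroup_trels[OF hm_module_hm_closed[OF A] hm_closed_tensor[OF B C]]]) auto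
  then show ?thesis by (simp add: frag_extend_fun_diff)
qed

lemma tassoc_inner_gen_act:
  assumes q: "Poly_Mapping.keys q \<subseteq> tgens A B v" and x: "u * v * w = x" and c: "c \<in> carrier (grp C w)"
  shows "frag_extend (tassoc_inner_gen B C w c) (frag_extend (tensor_act_gen A u) q)
      - frag_extend (tassoc_inner_gen B C (u * w) (act C w u c)) q \<in> trels A (tensor B C) x"
  unfolding frag_extend_frag_extend
proof (rule frag_extend_diff_in_frag_subgroup[OF frag_subgroup_trels[OF hm_module_hm_closed[OF A] hm_closed_tensor[OF B C]]])
  fix k assume "k \<in> Poly_Mapping.keys q"
  with q obtain z t a b where k: "k = (z, t, a, b)" "z * t = v" "a \<in> carrier (grp A z)" "b \<in> carrier (grp B t)"
    by (auto elim!: tgensE)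
  let ?X = "tcls B C (t * w) (frag_of (t, w, b, c))"
  have "frag_of (z * u, t * w, act A z u a, ?X) - frag_of (z, u * (t * w), a, act (tensor B C) (t * w) u ?X)
      \<in> trels A (tensor B C) x"
    using k x by (intro trels_balanced tcls_frag_of_carrier[OF hm_module_hm_closed[OF B] C] c) (auto simp: ac_simps)
  moreover have "act (tensor B C) (t * w) u ?X = tcls B C (t * (u * w)) (frag_of (t, u * w, b, act C w u c))"
    using tcls_frag_of_balanced[OF hm_module_hm_closed[OF B] C _ k(4) c, of u "t * (u * w)"]
    by (simp add: act_tensor_frag_of[OF k(4)] ac_simps)
  ultimately show "frag_extend (tassoc_inner_gen B C w c) (tensor_act_gen A u k)
      - tassoc_inner_gen B C (u * w) (act C w u c) k \<in> trels A (tensor B C) x"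
    by (simp add: k(1) tensor_act_gen_def tassoc_inner_gen_def ac_simps)
qed

lemma tassoc_gen_trels:
  assumes r: "r \<in> trels (tensor A B) C x"
  shows "frag_extend (tassoc_gen B C) r \<in> trels A (tensor B C) x"
proof (rule frag_extend_trels[OF hm_closed_tensor[OF A hm_module_hm_closed[OF B]] C frag_subgroup_trels[OF hm_module_hm_closed[OF A] hm_closed_tensor[OF B C]] _ _ _ r])
  fix z t d d' w
  assume x: "z * t = x" and d: "d \<in> carrier (grp (tensor A B) z)" and d': "d' \<in> carrier (grp (tensor A B) z)"
    and w: "w \<in> carrier (grp C t)"
  let ?q = "rep d + rep d'"
  have "d \<otimes>\<^bsub>grp (tensor A B) z\<^esub> d' = tcls A B z ?q"
    using carrier_tensorE[OF hm_module_hm_closed[OF A] hm_module_hm_closed[OF B] d] carrier_tensorE[OF hm_module_hm_closed[OF A] hm_module_hm_closed[OF B] d']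
    by (metis mult_tensor[OF hm_module_hm_closed[OF A] hm_module_hm_closed[OF B]])
  moreover have "frag_extend (tassoc_inner_gen B C t w) (rep (tcls A B z ?q) - ?q) \<in> trels A (tensor B C) x"
    using tassoc_inner_gen_trels[OF w rep_tcls[OF hm_module_hm_closed[OF A] hm_module_hm_closed[OF B], of z ?q]] x by simp
  ultimately show "tassoc_gen B C (z, t, d \<otimes>\<^bsub>grp (tensor A B) z\<^esub> d', w) - tassoc_gen B C (z, t, d, w)
      - tassoc_gen B C (z, t, d', w) \<in> trels A (tensor B C) x"
    by (simp add: tassoc_gen_def frag_extend_diff frag_extend_add diff_diff_eq)
next
  fix z t d w w'
  assume "z * t = x" "d \<in> carrier (grp (tensor A B) z)" "w \<in> carrier (grp C t)" "w' \<in> carrier (grp C t)"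
  then show "tassoc_gen B C (z, t, d, w \<otimes>\<^bsub>grp C t\<^esub> w') - tassoc_gen B C (z, t, d, w)
      - tassoc_gen B C (z, t, d, w') \<in> trels A (tensor B C) x"
    by (auto simp: tassoc_gen_def elim!: carrier_tensorE[OF hm_module_hm_closed[OF A] hm_module_hm_closed[OF B]] intro!: tassoc_inner_gen_mult)
next
  fix u v w d c
  assume x: "u * v * w = x" and d: "d \<in> carrier (grp (tensor A B) v)" and c: "c \<in> carrier (grp C w)"
  note N = frag_subgroup_trels[OF hm_module_hm_closed[OF A] hm_closed_tensor[OF B C]]
  let ?sq = "frag_extend (tensor_act_gen A u) (rep d)"
  have q: "Poly_Mapping.keys (rep d) \<subseteq> tgens A B v"
    using d by (rule carrier_tensorE[OF hm_module_hm_closed[OF A] hm_module_hm_closed[OF B]])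
  have "frag_extend (tassoc_inner_gen B C w c) r \<in> trels A (tensor B C) x" if "r \<in> trels A B (v * u)" for r
    using tassoc_inner_gen_trels[OF c that] x by (simp add: ac_simps)
  then have "frag_extend (tassoc_inner_gen B C w c) (rep (act (tensor A B) v u d))
      - frag_extend (tassoc_inner_gen B C w c) ?sq \<in> trels A (tensor B C) x"
    unfolding act_tensor by (rule frag_extend_rep_tcls[OF hm_module_hm_closed[OF A] hm_module_hm_closed[OF B] N])
  from frag_subgroup_add[OF N this tassoc_inner_gen_act[OF q x c]]
  show "tassoc_gen B C (v * u, w, act (tensor A B) v u d, c) - tassoc_gen B C (v, u * w, d, act C w u c)
      \<in> trels A (tensor B C) x"
    by (simp add: tassoc_gen_def)
qed

lemma tassoc_tcls:
  "tassoc A B C x (tcls (tensor A B) C x q) = tcls A (tensor B C) x (frag_extend (tassoc_gen B C) q)"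
  unfolding tassoc_eq
  by (rule tcls_frag_extend_rep[OF hm_closed_tensor[OF A hm_module_hm_closed[OF B]] C hm_module_hm_closed[OF A] hm_closed_tensor[OF B C] tassoc_gen_trels])

end

section \<open>Free HM-modules\<close>

lemma grp_zmod: "grp (zmod S \<pi>) x = free_Abelian_group {(u, s). s \<in> S \<and> u * \<pi> s = x}"
  by (simp add: zmod_def)

lemma carrier_zmod: "p \<in> carrier (grp (zmod S \<pi>) x) \<longleftrightarrow> Poly_Mapping.keys p \<subseteq> {(u, s). s \<in> S \<and> u * \<pi> s = x}"
  by (simp add: zmod_def)

lemma frag_of_carrier_zmod: "frag_of (u, s) \<in> carrier (grp (zmod S \<pi>) x) \<longleftrightarrow> s \<in> S \<and> u * \<pi> s = x"
  by (simp add: carrier_zmod keys_frag_of)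

lemma mult_zmod: "p \<otimes>\<^bsub>grp (zmod S \<pi>) x\<^esub> q = p + q"
  by (simp add: zmod_def)

lemma act_zmod: "act (zmod S \<pi>) x y p = frag_extend (\<lambda>(u, s). frag_of (u * y, s)) p"
  by (simp add: zmod_def)

lemma act_zmod_frag_of: "act (zmod S \<pi>) x y (frag_of (u, s)) = frag_of (u * y, s)"
  by (simp add: act_zmod)

lemma hm_module_zmod: "hm_module (zmod S \<pi>)"
  unfolding hm_module_def
proof (intro conjI allI impI)
  fix x
  show "comm_group (grp (zmod S \<pi>) x)" by (simp add: grp_zmod abelian_free_Abelian_group)
next
  fix x y
  show "act (zmod S \<pi>) x y \<in> hom (grp (zmod S \<pi>) x) (grp (zmod S \<pi>) (x * y))"
  proof (rule homI)
    fix a assume "a \<in> carrier (grp (zmod S \<pi>) x)"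
    then show "act (zmod S \<pi>) x y a \<in> carrier (grp (zmod S \<pi>) (x * y))"
      unfolding carrier_zmod act_zmod by (intro keys_frag_extend_subset) (auto simp: keys_frag_of ac_simps)
  qed (simp add: mult_zmod act_zmod frag_extend_add)
next
  fix x y z a
  show "act (zmod S \<pi>) (x * y) z (act (zmod S \<pi>) x y a) = act (zmod S \<pi>) x (y * z) a"
    by (simp add: act_zmod frag_extend_frag_extend case_prod_unfold mult.assoc)
next
  fix x a
  show "act (zmod S \<pi>) x 1 a = a"
    using frag_expansion[of a] by (simp add: act_zmod case_prod_unfold)
qed

lemma hm_module_zunit: "hm_module zunit"
  by (simp add: hm_module_def zunit_def abelian_integer_group hom_def)

lemma hm_closed_zmod: "hm_closed (zmod S \<pi>)"
  by (rule hm_module_hm_closed[OF hm_module_zmod])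

lemma hm_closed_zunit: "hm_closed zunit"
  by (rule hm_module_hm_closed[OF hm_module_zunit])

section \<open>The structure map \<open>\<Z>(S \<times> T) \<rightarrow> \<Z>S \<otimes> \<Z>T\<close>\<close>

definition zPhi_gen :: "('s \<Rightarrow> 'm::comm_monoid_mult) \<Rightarrow> ('t \<Rightarrow> 'm) \<Rightarrow> 'm \<times> ('s \<times> 't) \<Rightarrow>
    ('m \<times> 'm \<times> ('m \<times> 's \<Rightarrow>\<^sub>0 int) \<times> ('m \<times> 't \<Rightarrow>\<^sub>0 int) \<Rightarrow>\<^sub>0 int)" where
  "zPhi_gen \<pi> \<rho> = (\<lambda>(u, (s, t)). frag_of (u * \<pi> s, \<rho> t, frag_of (u, s), frag_of (1, t)))"

lemma zPhi_eq: "zPhi S \<pi> T \<rho> x p = tcls (zmod S \<pi>) (zmod T \<rho>) x (frag_extend (zPhi_gen \<pi> \<rho>) p)"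
  by (simp add: zPhi_def zPhi_gen_def)

lemma zPhi_gen_carrier:
  assumes "p \<in> carrier (grp (zmod (S \<times> T) (prod_over \<pi> \<rho>)) x)"
  shows "frag_extend (zPhi_gen \<pi> \<rho>) p \<in> carrier (tfree (zmod S \<pi>) (zmod T \<rho>) x)"
  using assms unfolding carrier_zmod carrier_tfree
  by (intro keys_frag_extend_subset)
     (auto simp: zPhi_gen_def prod_over_def keys_frag_of frag_of_carrier_zmod ac_simps intro!: tgensI)

definition zprod :: "('m::comm_monoid_mult \<times> 's \<Rightarrow>\<^sub>0 int) \<Rightarrow> ('m \<times> 't \<Rightarrow>\<^sub>0 int) \<Rightarrow> ('m \<times> ('s \<times> 't) \<Rightarrow>\<^sub>0 int)" where
  "zprod a b = frag_extend (\<lambda>(u, s). frag_extend (\<lambda>(v, t). frag_of (u * v, (s, t))) b) a"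

lemma zprod_add_left: "zprod (a + a') b = zprod a b + zprod a' b"
  by (simp add: zprod_def frag_extend_add)

lemma zprod_add_right: "zprod a (b + b') = zprod a b + zprod a b'"
  by (simp add: zprod_def frag_extend_add case_prod_unfold frag_extend_fun_add)

lemma zprod_frag_of: "zprod (frag_of (u, s)) (frag_of (v, t)) = frag_of (u * v, (s, t))"
  by (simp add: zprod_def)

lemma zprod_expand: "zprod a b = frag_extend (\<lambda>i. frag_extend (\<lambda>j. zprod (frag_of i) (frag_of j)) b) a"
  by (simp add: zprod_def case_prod_unfold)

lemma zprod_act: "zprod (act (zmod S \<pi>) v u a) b = zprod a (act (zmod T \<rho>) w u b)"
  by (simp add: zprod_def act_zmod frag_extend_frag_extend case_prod_unfold ac_simps)

lemma zprod_carrier: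
  assumes a: "a \<in> carrier (grp (zmod S \<pi>) z)" and b: "b \<in> carrier (grp (zmod T \<rho>) t)"
  shows "zprod a b \<in> carrier (grp (zmod (S \<times> T) (prod_over \<pi> \<rho>)) (z * t))"
  unfolding carrier_zmod zprod_def
proof (intro keys_frag_extend_subset)
  fix k assume "k \<in> Poly_Mapping.keys a"
  with a obtain u s where k: "k = (u, s)" "s \<in> S" "u * \<pi> s = z" by (auto simp: carrier_zmod)
  show "Poly_Mapping.keys ((\<lambda>(u, s). frag_extend (\<lambda>(v, t). frag_of (u * v, s, t)) b) k)
      \<subseteq> {(u, s). s \<in> S \<times> T \<and> u * prod_over \<pi> \<rho> s = z * t}"
    unfolding k(1) prod.case
  proof (intro keys_frag_extend_subset)
    fix j assume "j \<in> Poly_Mapping.keys b"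
    with b obtain v t' where j: "j = (v, t')" "t' \<in> T" "v * \<rho> t' = t" by (auto simp: carrier_zmod)
    have "u * v * prod_over \<pi> \<rho> (s, t') = z * t"
      using k j by (auto simp: prod_over_def ac_simps)
    then show "Poly_Mapping.keys ((\<lambda>(v, t). frag_of (u * v, s, t)) j)
        \<subseteq> {(u, s). s \<in> S \<times> T \<and> u * prod_over \<pi> \<rho> s = z * t}"
      using k j by (simp add: keys_frag_of)
  qed
qed

definition zPhi_inv_gen :: "'m \<times> 'm \<times> ('m::comm_monoid_mult \<times> 's \<Rightarrow>\<^sub>0 int) \<times> ('m \<times> 't \<Rightarrow>\<^sub>0 int) \<Rightarrow> ('m \<times> ('s \<times> 't) \<Rightarrow>\<^sub>0 int)" where
  "zPhi_inv_gen = (\<lambda>(z, t, a, b). zprod a b)"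

lemma zPhi_inv_gen_trels:
  assumes "r \<in> trels (zmod S \<pi>) (zmod T \<rho>) x"
  shows "frag_extend zPhi_inv_gen r = 0"
proof -
  have "frag_extend zPhi_inv_gen r \<in> {0}"
    by (rule frag_extend_trels[OF hm_closed_zmod hm_closed_zmod frag_subgroup_zero _ _ _ assms])
       (simp_all add: zPhi_inv_gen_def mult_zmod zprod_add_left zprod_add_right zprod_act)
  then show ?thesis by simp
qed

lemma zPhi_inv_gen_zPhi_gen: "frag_extend zPhi_inv_gen (frag_extend (zPhi_gen \<pi> \<rho>) p) = p"
proof -
  have "frag_extend zPhi_inv_gen (frag_extend (zPhi_gen \<pi> \<rho>) p) = frag_extend frag_of p"
    unfolding frag_extend_frag_extend
    by (rule frag_extend_eq) (auto simp: zPhi_gen_def zPhi_inv_gen_def zprod_frag_of)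
  then show ?thesis using frag_expansion[of p] by simp
qed

lemma zPhi_inv_gen_carrier:
  assumes "q \<in> carrier (tfree (zmod S \<pi>) (zmod T \<rho>) x)"
  shows "frag_extend zPhi_inv_gen q \<in> carrier (grp (zmod (S \<times> T) (prod_over \<pi> \<rho>)) x)"
  using assms unfolding carrier_tfree carrier_zmod[of _ "S \<times> T"]
  by (intro keys_frag_extend_subset)
     (auto elim!: tgensE simp: zPhi_inv_gen_def dest!: zprod_carrier simp flip: carrier_zmod)

lemma trels_expand_left:
  assumes A: "hm_closed A" and B: "hm_closed B" and G: "grp A z = free_Abelian_group X"
    and a: "Poly_Mapping.keys a \<subseteq> X" and b: "b \<in> carrier (grp B t)" and x: "z * t = x"
  shows "frag_of (z, t, a, b) - frag_extend (\<lambda>k. frag_of (z, t, frag_of k, b)) a \<in> trels A B x"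
proof (rule free_Abelian_group_induct[OF a,
      where P = "\<lambda>a. frag_of (z, t, a, b) - frag_extend (\<lambda>k. frag_of (z, t, frag_of k, b)) a \<in> trels A B x"])
  note N = frag_subgroup_trels[OF A B, of x]
  have "frag_of (z, t, 0 \<otimes>\<^bsub>grp A z\<^esub> 0, b) - frag_of (z, t, 0, b) - frag_of (z, t, 0, b) \<in> trels A B x"
    by (rule trels_add_left[OF x _ _ b]) (simp_all add: G)
  then show "frag_of (z, t, 0, b) - frag_extend (\<lambda>k. frag_of (z, t, frag_of k, b)) 0 \<in> trels A B x"
    using frag_subgroup_minus[OF N] by (fastforce simp: G)
next
  note N = frag_subgroup_trels[OF A B, of x]
  fix a1 a2
  assume keys: "Poly_Mapping.keys a1 \<subseteq> X" "Poly_Mapping.keys a2 \<subseteq> X"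
    and IH: "frag_of (z, t, a1, b) - frag_extend (\<lambda>k. frag_of (z, t, frag_of k, b)) a1 \<in> trels A B x"
      "frag_of (z, t, a2, b) - frag_extend (\<lambda>k. frag_of (z, t, frag_of k, b)) a2 \<in> trels A B x"
  have "frag_of (z, t, (a1 - a2) \<otimes>\<^bsub>grp A z\<^esub> a2, b) - frag_of (z, t, a1 - a2, b) - frag_of (z, t, a2, b)
      \<in> trels A B x"
    using keys keys_diff[of a1 a2] by (intro trels_add_left[OF x _ _ b]) (auto simp: G)
  then have "frag_of (z, t, a1, b) - frag_of (z, t, a1 - a2, b) - frag_of (z, t, a2, b) \<in> trels A B x"
    by (simp add: G)
  from frag_subgroup_diff[OF N frag_subgroup_diff[OF N IH] this]
  show "frag_of (z, t, a1 - a2, b) - frag_extend (\<lambda>k. frag_of (z, t, frag_of k, b)) (a1 - a2) \<in> trels A B x"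
    by (simp add: frag_extend_diff algebra_simps)
next
  fix k
  show "frag_of (z, t, frag_of k, b) - frag_extend (\<lambda>k. frag_of (z, t, frag_of k, b)) (frag_of k) \<in> trels A B x"
    using frag_subgroup_0[OF frag_subgroup_trels[OF A B]] by simp
qed

lemma trels_expand_right:
  assumes A: "hm_closed A" and B: "hm_closed B" and G: "grp B t = free_Abelian_group X"
    and a: "a \<in> carrier (grp A z)" and b: "Poly_Mapping.keys b \<subseteq> X" and x: "z * t = x"
  shows "frag_of (z, t, a, b) - frag_extend (\<lambda>k. frag_of (z, t, a, frag_of k)) b \<in> trels A B x"
proof -
  have "t * z = x" using x by (simp add: mult.commute)
  from tswap_gen_trels[OF B A trels_expand_left[OF B A G b a this]]
  show ?thesis by (simp add: frag_extend_diff frag_extend_frag_extend tswap_gen_def)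
qed

lemma zPhi_gen_frag_of_zprod:
  assumes i: "frag_of i \<in> carrier (grp (zmod S \<pi>) z)" and j: "frag_of j \<in> carrier (grp (zmod T \<rho>) t)"
    and x: "z * t = x"
  shows "frag_of (z, t, frag_of i, frag_of j) - frag_extend (zPhi_gen \<pi> \<rho>) (zprod (frag_of i) (frag_of j))
      \<in> trels (zmod S \<pi>) (zmod T \<rho>) x"
proof -
  obtain u s v t' where ij: "i = (u, s)" "j = (v, t')" by fastforce
  with i j have s: "s \<in> S" "u * \<pi> s = z" and t': "t' \<in> T" "v * \<rho> t' = t"
    by (simp_all add: frag_of_carrier_zmod)
  have "frag_of (z * v, \<rho> t', act (zmod S \<pi>) z v (frag_of (u, s)), frag_of (1, t'))
      - frag_of (z, v * \<rho> t', frag_of (u, s), act (zmod T \<rho>) (\<rho> t') v (frag_of (1, t')))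
      \<in> trels (zmod S \<pi>) (zmod T \<rho>) x"
    using s t' x by (intro trels_balanced) (auto simp: frag_of_carrier_zmod ac_simps)
  from frag_subgroup_minus[OF frag_subgroup_trels[OF hm_closed_zmod hm_closed_zmod] this]
  show ?thesis
    by (simp add: ij zprod_frag_of zPhi_gen_def act_zmod_frag_of ac_simps flip: s(2) t'(2))
qed

lemma zPhi_gen_zPhi_inv_gen:
  assumes q: "q \<in> carrier (tfree (zmod S \<pi>) (zmod T \<rho>) x)"
  shows "q - frag_extend (zPhi_gen \<pi> \<rho>) (frag_extend zPhi_inv_gen q) \<in> trels (zmod S \<pi>) (zmod T \<rho>) x"
proof -
  note N = frag_subgroup_trels[OF hm_closed_zmod hm_closed_zmod, of S \<pi> T \<rho> x]
  have "frag_of (z, t, a, b) - frag_extend (zPhi_gen \<pi> \<rho>) (zprod a b) \<in> trels (zmod S \<pi>) (zmod T \<rho>) x"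
    if x: "z * t = x" and a: "a \<in> carrier (grp (zmod S \<pi>) z)" and b: "b \<in> carrier (grp (zmod T \<rho>) t)"
    for z t a b
  proof -
    let ?E = "\<lambda>i. frag_extend (\<lambda>j. frag_of (z, t, frag_of i, frag_of j)) b"
    have ka: "frag_of i \<in> carrier (grp (zmod S \<pi>) z)" if "i \<in> Poly_Mapping.keys a" for i
      using a that by (auto simp: carrier_zmod keys_frag_of)
    have kb: "frag_of j \<in> carrier (grp (zmod T \<rho>) t)" if "j \<in> Poly_Mapping.keys b" for j
      using b that by (auto simp: carrier_zmod keys_frag_of)
    have "frag_of (z, t, a, b) - frag_extend (\<lambda>i. frag_of (z, t, frag_of i, b)) a \<in> trels (zmod S \<pi>) (zmod T \<rho>) x"
      using a by (intro trels_expand_left[OF hm_closed_zmod hm_closed_zmod grp_zmod _ b x]) (simp add: carrier_zmod)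
    moreover have "frag_extend (\<lambda>i. frag_of (z, t, frag_of i, b)) a - frag_extend ?E a \<in> trels (zmod S \<pi>) (zmod T \<rho>) x"
      using b ka by (intro frag_extend_diff_in_frag_subgroup[OF N] trels_expand_right[OF hm_closed_zmod hm_closed_zmod grp_zmod _ _ x])
        (simp_all add: carrier_zmod)
    moreover have "frag_extend ?E a - frag_extend (zPhi_gen \<pi> \<rho>) (zprod a b) \<in> trels (zmod S \<pi>) (zmod T \<rho>) x"
      unfolding zprod_expand[of a b] frag_extend_frag_extend
      using ka kb by (intro frag_extend_diff_in_frag_subgroup[OF N] zPhi_gen_frag_of_zprod[OF _ _ x]) auto
    ultimately show ?thesis
      by (blast intro: frag_subgroup_trans[OF N])
  qed
  then have "frag_extend frag_of q - frag_extend (\<lambda>k. frag_extend (zPhi_gen \<pi> \<rho>) (zPhi_inv_gen k)) q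
      \<in> trels (zmod S \<pi>) (zmod T \<rho>) x"
    using q by (intro frag_extend_diff_in_frag_subgroup[OF N]) (auto simp: carrier_tfree zPhi_inv_gen_def elim!: tgensE)
  then show ?thesis by (simp flip: frag_expansion add: frag_extend_frag_extend)
qed

lemma zPhi_iso: "hm_iso (zmod (S \<times> T) (prod_over \<pi> \<rho>)) (tensor (zmod S \<pi>) (zmod T \<rho>)) (zPhi S \<pi> T \<rho>)"
proof -
  let ?ZS = "zmod S \<pi>" and ?ZT = "zmod T \<rho>" and ?Z = "zmod (S \<times> T) (prod_over \<pi> \<rho>)"
  note ZS = hm_closed_zmod[of S \<pi>] and ZT = hm_closed_zmod[of T \<rho>]
  have carrier: "zPhi S \<pi> T \<rho> x p \<in> carrier (grp (tensor ?ZS ?ZT) x)" if "p \<in> carrier (grp ?Z x)" for x p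
    using zPhi_gen_carrier[OF that] by (simp add: zPhi_eq carrier_tensor)
  have hom: "zPhi S \<pi> T \<rho> x \<in> hom (grp ?Z x) (grp (tensor ?ZS ?ZT) x)" for x
    using carrier by (intro homI) (simp_all add: mult_zmod zPhi_eq frag_extend_add mult_tensor[OF ZS ZT])
  have natural: "zPhi S \<pi> T \<rho> (x * y) (act ?Z x y p) = act (tensor ?ZS ?ZT) x y (zPhi S \<pi> T \<rho> x p)" for x y p
  proof -
    have "frag_extend (tensor_act_gen ?ZS y) (frag_extend (zPhi_gen \<pi> \<rho>) p) = frag_extend (zPhi_gen \<pi> \<rho>) (act ?Z x y p)"
      unfolding act_zmod frag_extend_frag_extend
      by (rule frag_extend_eq) (auto simp: zPhi_gen_def tensor_act_gen_def act_zmod_frag_of ac_simps)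
    then show ?thesis by (simp add: zPhi_eq act_tensor_tcls[OF hm_module_zmod ZT])
  qed
  have inj: "inj_on (zPhi S \<pi> T \<rho> x) (carrier (grp ?Z x))" for x
  proof (rule inj_onI)
    fix p p' assume "zPhi S \<pi> T \<rho> x p = zPhi S \<pi> T \<rho> x p'"
    then have "frag_extend (zPhi_gen \<pi> \<rho>) p - frag_extend (zPhi_gen \<pi> \<rho>) p' \<in> trels ?ZS ?ZT x"
      by (simp add: zPhi_eq tcls_eq_iff[OF ZS ZT])
    then show "p = p'"
      using zPhi_inv_gen_trels by (fastforce simp: frag_extend_diff zPhi_inv_gen_zPhi_gen)
  qed
  have surj: "zPhi S \<pi> T \<rho> x ` carrier (grp ?Z x) = carrier (grp (tensor ?ZS ?ZT) x)" for x
  proof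
    show "zPhi S \<pi> T \<rho> x ` carrier (grp ?Z x) \<subseteq> carrier (grp (tensor ?ZS ?ZT) x)"
      using carrier by blast
  next
    show "carrier (grp (tensor ?ZS ?ZT) x) \<subseteq> zPhi S \<pi> T \<rho> x ` carrier (grp ?Z x)"
    proof
      fix c assume "c \<in> carrier (grp (tensor ?ZS ?ZT) x)"
      then obtain q where q: "q \<in> carrier (tfree ?ZS ?ZT x)" and c: "c = tcls ?ZS ?ZT x q"
        by (auto simp: carrier_tensor)
      have "zPhi S \<pi> T \<rho> x (frag_extend zPhi_inv_gen q) = c"
        using frag_subgroup_minus[OF frag_subgroup_trels[OF ZS ZT] zPhi_gen_zPhi_inv_gen[OF q]]
        by (simp add: zPhi_eq c tcls_eq_iff[OF ZS ZT])
      then show "c \<in> zPhi S \<pi> T \<rho> x ` carrier (grp ?Z x)"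
        using zPhi_inv_gen_carrier[OF q] by blast
    qed
  qed
  show ?thesis
    unfolding hm_iso_def hm_hom_def bij_betw_def using hom natural inj surj by blast
qed

section \<open>The structure map \<open>\<Z>{e} \<rightarrow> \<int>\<close>\<close>

lemma carrier_zmod_unit: "p \<in> carrier (grp (zmod unit_set unit_over) x) \<longleftrightarrow> Poly_Mapping.keys p \<subseteq> {(x, ())}"
  by (auto simp: carrier_zmod unit_set_def unit_over_def)

lemma keys_subset_singleton_eq: "Poly_Mapping.keys p \<subseteq> {k} \<Longrightarrow> p = frag_cmul (poly_mapping.lookup p k) (frag_of k)"
  by (rule poly_mapping_eqI) (auto simp: lookup_single in_keys_iff)

lemma zPsi_eq: "Poly_Mapping.keys p \<subseteq> {(x, ())} \<Longrightarrow> zPsi x p = poly_mapping.lookup p (x, ())"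
  by (cases "Poly_Mapping.keys p = {}") (auto simp: zPsi_def subset_singleton_iff in_keys_iff)

lemma zPsi_frag_of: "zPsi x (frag_of k) = 1"
  by (simp add: zPsi_def keys_frag_of)

lemma zPsi_iso: "hm_iso (zmod unit_set unit_over) (zunit :: ('m::comm_monoid_mult, int) hmmod) zPsi"
proof -
  let ?Z = "zmod unit_set (unit_over :: unit \<Rightarrow> 'm)"
  have keys_cmul_unit: "Poly_Mapping.keys (frag_cmul n (frag_of (x, ()))) \<subseteq> {(x, ())}" for n and x :: 'm
    using keys_cmul[of n "frag_of (x, ())"] by (simp add: keys_frag_of)
  have hom: "zPsi x \<in> hom (grp ?Z x) (grp (zunit :: ('m, int) hmmod) x)" for x :: 'm
  proof (rule homI)
    fix p q assume p: "p \<in> carrier (grp ?Z x)" and q: "q \<in> carrier (grp ?Z x)"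
    moreover have "Poly_Mapping.keys (p + q) \<subseteq> {(x, ())}"
      using p q keys_add[of p q] by (auto simp: carrier_zmod_unit)
    ultimately show "zPsi x (p \<otimes>\<^bsub>grp ?Z x\<^esub> q) = zPsi x p \<otimes>\<^bsub>grp zunit x\<^esub> zPsi x q"
      by (simp add: carrier_zmod_unit mult_zmod zPsi_eq lookup_add zunit_def)
  qed (simp add: zunit_def)
  have natural: "zPsi (x * y) (act ?Z x y p) = act (zunit :: ('m, int) hmmod) x y (zPsi x p)"
    if "p \<in> carrier (grp ?Z x)" for x y :: 'm and p
  proof -
    have k: "Poly_Mapping.keys p \<subseteq> {(x, ())}" using that by (simp add: carrier_zmod_unit)
    have "act ?Z x y p = frag_cmul (poly_mapping.lookup p (x, ())) (frag_of (x * y, ()))"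
      by (subst keys_subset_singleton_eq[OF k]) (simp add: act_zmod frag_extend_cmul)
    then show ?thesis using k keys_cmul_unit by (simp add: zPsi_eq zunit_def)
  qed
  have bij: "bij_betw (zPsi x) (carrier (grp ?Z x)) (carrier (grp (zunit :: ('m, int) hmmod) x))" for x :: 'm
  proof (rule bij_betwI[where g = "\<lambda>n. frag_cmul n (frag_of (x, ()))"])
    fix p assume "p \<in> carrier (grp ?Z x)"
    then have k: "Poly_Mapping.keys p \<subseteq> {(x, ())}" by (simp add: carrier_zmod_unit)
    show "frag_cmul (zPsi x p) (frag_of (x, ())) = p"
      using keys_subset_singleton_eq[OF k] by (simp add: zPsi_eq[OF k])
  qed (auto simp: zunit_def carrier_zmod_unit keys_cmul_unit zPsi_eq)
  show ?thesis unfolding hm_iso_def hm_hom_def using hom natural bij by blast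
qed

section \<open>Coherence\<close>

lemma hm_hom_zPhi: "hm_hom (zmod (S \<times> T) (prod_over \<pi> \<rho>)) (tensor (zmod S \<pi>) (zmod T \<rho>)) (zPhi S \<pi> T \<rho>)"
  using zPhi_iso unfolding hm_iso_def by blast

lemma hm_hom_zPsi: "hm_hom (zmod unit_set unit_over) (zunit :: ('m::comm_monoid_mult, int) hmmod) zPsi"
  using zPsi_iso unfolding hm_iso_def by blast

lemma zmap_eq: "zmap \<phi> x p = frag_extend (\<lambda>(u, s). frag_of (u, \<phi> s)) p"
  by (simp add: zmap_def)

lemma hm_hom_zmap:
  assumes "over_hom S \<pi> S' \<pi>' \<phi>"
  shows "hm_hom (zmod S \<pi>) (zmod S' \<pi>') (zmap \<phi>)"
  unfolding hm_hom_def
proof (intro conjI allI impI)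
  fix x
  show "zmap \<phi> x \<in> hom (grp (zmod S \<pi>) x) (grp (zmod S' \<pi>') x)"
  proof (rule homI)
    fix a assume "a \<in> carrier (grp (zmod S \<pi>) x)"
    then show "zmap \<phi> x a \<in> carrier (grp (zmod S' \<pi>') x)"
      unfolding carrier_zmod zmap_eq using assms
      by (intro keys_frag_extend_subset) (auto simp: keys_frag_of over_hom_def)
  qed (simp add: mult_zmod zmap_eq frag_extend_add)
next
  fix x y a
  show "zmap \<phi> (x * y) (act (zmod S \<pi>) x y a) = act (zmod S' \<pi>') x y (zmap \<phi> x a)"
    by (simp add: zmap_eq act_zmod frag_extend_frag_extend case_prod_unfold)
qed

lemma zPhi_natural:
  assumes \<phi>: "over_hom S \<pi> S' \<pi>' \<phi>" and \<chi>: "over_hom T \<rho> T' \<rho>' \<chi>"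
  shows "hm_eq (zmod (S \<times> T) (prod_over \<pi> \<rho>))
    (\<lambda>x p. tensor_hom (zmod S' \<pi>') (zmod T' \<rho>') (zmap \<phi>) (zmap \<chi>) x (zPhi S \<pi> T \<rho> x p))
    (\<lambda>x p. zPhi S' \<pi>' T' \<rho>' x (zmap (map_prod \<phi> \<chi>) x p))"
  unfolding hm_eq_def
proof (intro allI ballI)
  fix x p assume p: "p \<in> carrier (grp (zmod (S \<times> T) (prod_over \<pi> \<rho>)) x)"
  have "frag_extend (tensor_hom_gen (zmap \<phi>) (zmap \<chi>)) (frag_extend (zPhi_gen \<pi> \<rho>) p)
      = frag_extend (zPhi_gen \<pi>' \<rho>') (zmap (map_prod \<phi> \<chi>) x p)"
    unfolding frag_extend_frag_extend zmap_eq[of _ x p]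
  proof (rule frag_extend_eq)
    fix k assume "k \<in> Poly_Mapping.keys p"
    with p obtain u s t where k: "k = (u, (s, t))" "s \<in> S" "t \<in> T" by (auto simp: carrier_zmod)
    with \<phi> \<chi> have "\<pi>' (\<phi> s) = \<pi> s" "\<rho>' (\<chi> t) = \<rho> t" by (auto simp: over_hom_def)
    then show "frag_extend (tensor_hom_gen (zmap \<phi>) (zmap \<chi>)) (zPhi_gen \<pi> \<rho> k)
        = frag_extend (zPhi_gen \<pi>' \<rho>') ((\<lambda>(u, s). frag_of (u, map_prod \<phi> \<chi> s)) k)"
      by (simp add: k tensor_hom_gen_def zPhi_gen_def zmap_eq)
  qed
  then show "tensor_hom (zmod S' \<pi>') (zmod T' \<rho>') (zmap \<phi>) (zmap \<chi>) x (zPhi S \<pi> T \<rho> x p)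
      = zPhi S' \<pi>' T' \<rho>' x (zmap (map_prod \<phi> \<chi>) x p)"
    by (simp add: zPhi_eq tensor_hom_tcls[OF hm_closed_zmod hm_closed_zmod hm_closed_zmod hm_closed_zmod
          hm_hom_zmap[OF \<phi>] hm_hom_zmap[OF \<chi>]])
qed

lemma tswap_zPhi:
  "hm_eq (zmod (S \<times> T) (prod_over \<pi> \<rho>))
    (\<lambda>x p. tswap (zmod S \<pi>) (zmod T \<rho>) x (zPhi S \<pi> T \<rho> x p))
    (\<lambda>x p. zPhi T \<rho> S \<pi> x (zmap prod.swap x p))"
  unfolding hm_eq_def
proof (intro allI ballI)
  fix x p assume p: "p \<in> carrier (grp (zmod (S \<times> T) (prod_over \<pi> \<rho>)) x)"
  note Z = hm_closed_zmod
  have "frag_extend tswap_gen (frag_extend (zPhi_gen \<pi> \<rho>) p) - frag_extend (zPhi_gen \<rho> \<pi>) (zmap prod.swap x p)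
      \<in> trels (zmod T \<rho>) (zmod S \<pi>) x"
    unfolding frag_extend_frag_extend zmap_eq
  proof (rule frag_extend_diff_in_frag_subgroup[OF frag_subgroup_trels[OF Z Z]])
    fix k assume "k \<in> Poly_Mapping.keys p"
    with p obtain u s t where k: "k = (u, (s, t))" "s \<in> S" "t \<in> T" "u * (\<pi> s * \<rho> t) = x"
      by (auto simp: carrier_zmod prod_over_def)
    have "frag_of (\<rho> t * u, \<pi> s, act (zmod T \<rho>) (\<rho> t) u (frag_of (1, t)), frag_of (1, s))
        - frag_of (\<rho> t, u * \<pi> s, frag_of (1, t), act (zmod S \<pi>) (\<pi> s) u (frag_of (1, s)))
        \<in> trels (zmod T \<rho>) (zmod S \<pi>) x"
      using k by (intro trels_balanced) (auto simp: frag_of_carrier_zmod ac_simps)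
    from frag_subgroup_minus[OF frag_subgroup_trels[OF Z Z] this]
    show "frag_extend tswap_gen (zPhi_gen \<pi> \<rho> k)
        - frag_extend (zPhi_gen \<rho> \<pi>) ((\<lambda>(u, s). frag_of (u, prod.swap s)) k) \<in> trels (zmod T \<rho>) (zmod S \<pi>) x"
      by (simp add: k(1) tswap_gen_def zPhi_gen_def act_zmod_frag_of mult.commute)
  qed
  then show "tswap (zmod S \<pi>) (zmod T \<rho>) x (zPhi S \<pi> T \<rho> x p) = zPhi T \<rho> S \<pi> x (zmap prod.swap x p)"
    by (simp add: zPhi_eq tswap_tcls[OF Z Z] tcls_eq_iff[OF Z Z])
qed

lemma finprod_free_Abelian_group:
  assumes "finite K" "g \<in> K \<rightarrow> carrier (free_Abelian_group Y)"
  shows "finprod (free_Abelian_group Y) g K = sum g K"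
proof -
  interpret comm_group "free_Abelian_group Y" by (rule abelian_free_Abelian_group)
  show ?thesis using assms by (induction K rule: finite_induct) auto
qed

lemma gext_free_Abelian_group:
  assumes "\<And>k. k \<in> Poly_Mapping.keys p \<Longrightarrow> Poly_Mapping.keys (f k) \<subseteq> Y"
  shows "gext (free_Abelian_group Y) f p = frag_extend f p"
proof -
  have "gext (free_Abelian_group Y) f p = (\<Sum>k \<in> Poly_Mapping.keys p. frag_cmul (poly_mapping.lookup p k) (f k))"
    unfolding gext_def using assms keys_cmul
    by (subst finprod_free_Abelian_group) (force intro!: sum.cong)+
  then show ?thesis by (simp add: frag_extend_def)
qed


definition runit_gen :: "'m \<times> 'm \<times> ('m::comm_monoid_mult \<times> 's \<Rightarrow>\<^sub>0 int) \<times> int \<Rightarrow> ('m \<times> 's \<Rightarrow>\<^sub>0 int)" where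
  "runit_gen = (\<lambda>(z, t, a, n). frag_cmul n (frag_extend (\<lambda>(u, s). frag_of (u * t, s)) a))"

lemma runit_gen_trels:
  assumes "r \<in> trels (zmod S \<pi>) (zunit :: ('m::comm_monoid_mult, int) hmmod) x"
  shows "frag_extend runit_gen r = 0"
proof -
  have "frag_extend runit_gen r \<in> {0}"
    by (rule frag_extend_trels[OF hm_closed_zmod hm_closed_zunit frag_subgroup_zero _ _ _ assms])
       (simp_all add: runit_gen_def mult_zmod frag_extend_add frag_cmul_distrib frag_cmul_distrib2
         zunit_def act_zmod frag_extend_frag_extend case_prod_unfold ac_simps)
  then show ?thesis by simp
qed

lemma runit_tcls:
  assumes q: "Poly_Mapping.keys q \<subseteq> tgens (zmod S \<pi>) (zunit :: ('m::comm_monoid_mult, int) hmmod) x"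
  shows "runit (zmod S \<pi>) x (tcls (zmod S \<pi>) zunit x q) = frag_extend runit_gen q"
proof -
  let ?r = "rep (tcls (zmod S \<pi>) (zunit :: ('m, int) hmmod) x q)"
  let ?B = "{(u, s). s \<in> S \<and> u * \<pi> s = x}"
  let ?g = "\<lambda>(z, t, a, n). act (zmod S \<pi>) z t a [^]\<^bsub>free_Abelian_group ?B\<^esub> n"
  have gen: "?g k = runit_gen k \<and> Poly_Mapping.keys (runit_gen k) \<subseteq> ?B" if "k \<in> Poly_Mapping.keys ?r" for k
  proof -
    from that keys_rep_tcls[OF hm_closed_zmod hm_closed_zunit q]
    obtain z t a n where k: "k = (z, t, a, n)" "z * t = x" "a \<in> carrier (grp (zmod S \<pi>) z)"
      by (auto elim!: tgensE)
    then have "act (zmod S \<pi>) z t a \<in> carrier (grp (zmod S \<pi>) x)"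
      using hm_closed_act[OF hm_closed_zmod] by blast
    then show ?thesis
      using keys_cmul[of n "act (zmod S \<pi>) z t a"] by (auto simp: k(1) runit_gen_def carrier_zmod act_zmod)
  qed
  have "runit (zmod S \<pi>) x (tcls (zmod S \<pi>) zunit x q) = frag_extend ?g ?r"
    unfolding runit_def grp_zmod using gen by (intro gext_free_Abelian_group) auto
  also have "\<dots> = frag_extend runit_gen ?r"
    using gen by (intro frag_extend_eq) auto
  also have "\<dots> = frag_extend runit_gen q"
    by (rule frag_extend_rep_tcls_eq[OF hm_closed_zmod hm_closed_zunit runit_gen_trels])
  finally show ?thesis .
qed

lemma runit_zPhi:
  "hm_eq (zmod (S \<times> unit_set) (prod_over \<pi> unit_over))
    (\<lambda>x p. runit (zmod S \<pi>) x (tensor_hom (zmod S \<pi>) zunit (\<lambda>y q. q) zPsi x (zPhi S \<pi> unit_set unit_over x p)))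
    (zmap fst)"
  unfolding hm_eq_def
proof (intro allI ballI)
  fix x p assume p: "p \<in> carrier (grp (zmod (S \<times> unit_set) (prod_over \<pi> unit_over)) x)"
  let ?Q = "frag_extend (tensor_hom_gen (\<lambda>y q. q) zPsi) (frag_extend (zPhi_gen \<pi> unit_over) p)"
  have "tensor_hom (zmod S \<pi>) zunit (\<lambda>y q. q) zPsi x (zPhi S \<pi> unit_set unit_over x p) = tcls (zmod S \<pi>) zunit x ?Q"
    unfolding zPhi_eq
    by (rule tensor_hom_tcls[OF hm_closed_zmod hm_closed_zmod hm_closed_zmod hm_closed_zunit hm_hom_id hm_hom_zPsi])
  moreover have "Poly_Mapping.keys ?Q \<subseteq> tgens (zmod S \<pi>) zunit x"
    using zPhi_gen_carrier[OF p] by (intro keys_tensor_hom_gen[OF hm_hom_id hm_hom_zPsi]) (simp add: carrier_tfree)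
  moreover have "frag_extend runit_gen ?Q = zmap fst x p"
    unfolding frag_extend_frag_extend zmap_eq
    by (rule frag_extend_eq) (auto simp: tensor_hom_gen_def zPhi_gen_def runit_gen_def zPsi_frag_of unit_over_def)
  ultimately show "runit (zmod S \<pi>) x (tensor_hom (zmod S \<pi>) zunit (\<lambda>y q. q) zPsi x (zPhi S \<pi> unit_set unit_over x p))
      = zmap fst x p"
    by (simp add: runit_tcls)
qed


definition lunit_gen :: "'m \<times> 'm \<times> int \<times> ('m::comm_monoid_mult \<times> 's \<Rightarrow>\<^sub>0 int) \<Rightarrow> ('m \<times> 's \<Rightarrow>\<^sub>0 int)" where
  "lunit_gen = (\<lambda>(z, t, n, a). frag_cmul n (frag_extend (\<lambda>(u, s). frag_of (u * z, s)) a))"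

lemma lunit_gen_trels:
  assumes "r \<in> trels (zunit :: ('m::comm_monoid_mult, int) hmmod) (zmod S \<pi>) x"
  shows "frag_extend lunit_gen r = 0"
proof -
  have "frag_extend lunit_gen r \<in> {0}"
    by (rule frag_extend_trels[OF hm_closed_zunit hm_closed_zmod frag_subgroup_zero _ _ _ assms])
       (simp_all add: lunit_gen_def mult_zmod frag_extend_add frag_cmul_distrib frag_cmul_distrib2
         zunit_def act_zmod frag_extend_frag_extend case_prod_unfold ac_simps)
  then show ?thesis by simp
qed

lemma lunit_tcls:
  assumes q: "Poly_Mapping.keys q \<subseteq> tgens (zunit :: ('m::comm_monoid_mult, int) hmmod) (zmod S \<pi>) x"
  shows "lunit (zmod S \<pi>) x (tcls zunit (zmod S \<pi>) x q) = frag_extend lunit_gen q"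
proof -
  let ?r = "rep (tcls (zunit :: ('m, int) hmmod) (zmod S \<pi>) x q)"
  let ?B = "{(u, s). s \<in> S \<and> u * \<pi> s = x}"
  let ?g = "\<lambda>(z, t, n, a). act (zmod S \<pi>) t z a [^]\<^bsub>free_Abelian_group ?B\<^esub> n"
  have gen: "?g k = lunit_gen k \<and> Poly_Mapping.keys (lunit_gen k) \<subseteq> ?B" if "k \<in> Poly_Mapping.keys ?r" for k
  proof -
    from that keys_rep_tcls[OF hm_closed_zunit hm_closed_zmod q]
    obtain z t n a where k: "k = (z, t, n, a)" "z * t = x" "a \<in> carrier (grp (zmod S \<pi>) t)"
      by (auto elim!: tgensE)
    then have "act (zmod S \<pi>) t z a \<in> carrier (grp (zmod S \<pi>) x)"
      using hm_closed_act[OF hm_closed_zmod] by (metis mult.commute)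
    then show ?thesis
      using keys_cmul[of n "act (zmod S \<pi>) t z a"] by (auto simp: k(1) lunit_gen_def carrier_zmod act_zmod)
  qed
  have "lunit (zmod S \<pi>) x (tcls zunit (zmod S \<pi>) x q) = frag_extend ?g ?r"
    unfolding lunit_def grp_zmod using gen by (intro gext_free_Abelian_group) auto
  also have "\<dots> = frag_extend lunit_gen ?r"
    using gen by (intro frag_extend_eq) auto
  also have "\<dots> = frag_extend lunit_gen q"
    by (rule frag_extend_rep_tcls_eq[OF hm_closed_zunit hm_closed_zmod lunit_gen_trels])
  finally show ?thesis .
qed

lemma lunit_zPhi:
  "hm_eq (zmod (unit_set \<times> S) (prod_over unit_over \<pi>))
    (\<lambda>x p. lunit (zmod S \<pi>) x (tensor_hom zunit (zmod S \<pi>) zPsi (\<lambda>y q. q) x (zPhi unit_set unit_over S \<pi> x p)))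
    (zmap snd)"
  unfolding hm_eq_def
proof (intro allI ballI)
  fix x p assume p: "p \<in> carrier (grp (zmod (unit_set \<times> S) (prod_over unit_over \<pi>)) x)"
  let ?Q = "frag_extend (tensor_hom_gen zPsi (\<lambda>y q. q)) (frag_extend (zPhi_gen unit_over \<pi>) p)"
  have "tensor_hom zunit (zmod S \<pi>) zPsi (\<lambda>y q. q) x (zPhi unit_set unit_over S \<pi> x p) = tcls zunit (zmod S \<pi>) x ?Q"
    unfolding zPhi_eq
    by (rule tensor_hom_tcls[OF hm_closed_zmod hm_closed_zmod hm_closed_zunit hm_closed_zmod hm_hom_zPsi hm_hom_id])
  moreover have "Poly_Mapping.keys ?Q \<subseteq> tgens zunit (zmod S \<pi>) x"
    using zPhi_gen_carrier[OF p] by (intro keys_tensor_hom_gen[OF hm_hom_zPsi hm_hom_id]) (simp add: carrier_tfree)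
  moreover have "frag_extend lunit_gen ?Q = zmap snd x p"
    unfolding frag_extend_frag_extend zmap_eq
    by (rule frag_extend_eq) (auto simp: tensor_hom_gen_def zPhi_gen_def lunit_gen_def zPsi_frag_of unit_over_def)
  ultimately show "lunit (zmod S \<pi>) x (tensor_hom zunit (zmod S \<pi>) zPsi (\<lambda>y q. q) x (zPhi unit_set unit_over S \<pi> x p))
      = zmap snd x p"
    by (simp add: lunit_tcls)
qed

lemma tassoc_zPhi:
  fixes S :: "'s set" and T :: "'t set" and U :: "'u set" and \<pi> :: "'s \<Rightarrow> 'm::comm_monoid_mult"
  shows "hm_eq (zmod ((S \<times> T) \<times> U) (prod_over (prod_over \<pi> \<rho>) \<sigma>))
    (\<lambda>x p. tassoc (zmod S \<pi>) (zmod T \<rho>) (zmod U \<sigma>) x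
       (tensor_hom (tensor (zmod S \<pi>) (zmod T \<rho>)) (zmod U \<sigma>) (zPhi S \<pi> T \<rho>) (\<lambda>y q. q) x
          (zPhi (S \<times> T) (prod_over \<pi> \<rho>) U \<sigma> x p)))
    (\<lambda>x p. tensor_hom (zmod S \<pi>) (tensor (zmod T \<rho>) (zmod U \<sigma>)) (\<lambda>y q. q) (zPhi T \<rho> U \<sigma>) x
       (zPhi S \<pi> (T \<times> U) (prod_over \<rho> \<sigma>) x (zmap (\<lambda>((s, t), u). (s, (t, u))) x p)))"
  unfolding hm_eq_def
proof (intro allI ballI)
  let ?ZS = "zmod S \<pi>" and ?ZT = "zmod T \<rho>" and ?ZU = "zmod U \<sigma>"
  note Z = hm_closed_zmod and M = hm_module_zmod
  have ZST: "hm_closed (tensor ?ZS ?ZT)" and ZTU: "hm_closed (tensor ?ZT ?ZU)"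
    by (simp_all add: hm_closed_tensor[OF M Z])
  fix x p assume p: "p \<in> carrier (grp (zmod ((S \<times> T) \<times> U) (prod_over (prod_over \<pi> \<rho>) \<sigma>)) x)"
  let ?assoc = "\<lambda>((s, t), u). (s, (t, u))"
  let ?F = "\<lambda>k. frag_extend (tassoc_gen ?ZT ?ZU)
      (frag_extend (tensor_hom_gen (zPhi S \<pi> T \<rho>) (\<lambda>y q. q)) (zPhi_gen (prod_over \<pi> \<rho>) \<sigma> k))"
  let ?G = "\<lambda>k. frag_extend (tensor_hom_gen (\<lambda>y q. q) (zPhi T \<rho> U \<sigma>))
      (frag_extend (zPhi_gen \<pi> (prod_over \<rho> \<sigma>)) (zmap ?assoc x (frag_of k)))"
  have "?F k - ?G k \<in> trels ?ZS (tensor ?ZT ?ZU) x" if "k \<in> Poly_Mapping.keys p" for k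
  proof -
    from p that have "k \<in> {(u, s). s \<in> (S \<times> T) \<times> U \<and> u * prod_over (prod_over \<pi> \<rho>) \<sigma> s = x}"
      by (auto simp: carrier_zmod)
    then obtain u s t r where k: "k = (u, ((s, t), r))" "s \<in> S" "t \<in> T" "r \<in> U"
      "u * (\<pi> s * \<rho> t) * \<sigma> r = x"
      by (auto simp: prod_over_def mult.assoc)
    let ?e = "frag_of (u * \<pi> s, \<rho> t, frag_of (u, s), frag_of (1, t))"
    have "frag_extend (tassoc_inner_gen ?ZT ?ZU (\<sigma> r) (frag_of (1, r))) (rep (tcls ?ZS ?ZT (u * (\<pi> s * \<rho> t)) ?e) - ?e)
        \<in> trels ?ZS (tensor ?ZT ?ZU) x"
      using tassoc_inner_gen_trels[OF M[of S \<pi>] M[of T \<rho>] Z[of U \<sigma>] _ rep_tcls[OF Z Z],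
          where w = "frag_of (1, r)" and t = "\<sigma> r" and z = "u * (\<pi> s * \<rho> t)"] k
      by (simp add: frag_of_carrier_zmod)
    then show ?thesis
      by (simp add: k(1) zPhi_gen_def tensor_hom_gen_def prod_over_def zPhi_eq tassoc_gen_def zmap_eq
          frag_extend_diff tassoc_inner_gen_def mult.assoc)
  qed
  from frag_extend_diff_in_frag_subgroup[OF frag_subgroup_trels[OF Z ZTU] this]
  have "frag_extend (tassoc_gen ?ZT ?ZU)
        (frag_extend (tensor_hom_gen (zPhi S \<pi> T \<rho>) (\<lambda>y q. q)) (frag_extend (zPhi_gen (prod_over \<pi> \<rho>) \<sigma>) p))
      - frag_extend (tensor_hom_gen (\<lambda>y q. q) (zPhi T \<rho> U \<sigma>)) (frag_extend (zPhi_gen \<pi> (prod_over \<rho> \<sigma>)) (zmap ?assoc x p))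
      \<in> trels ?ZS (tensor ?ZT ?ZU) x"
    by (simp add: frag_extend_frag_extend zmap_eq)
  then show "tassoc ?ZS ?ZT ?ZU x (tensor_hom (tensor ?ZS ?ZT) ?ZU (zPhi S \<pi> T \<rho>) (\<lambda>y q. q) x
        (zPhi (S \<times> T) (prod_over \<pi> \<rho>) U \<sigma> x p))
      = tensor_hom ?ZS (tensor ?ZT ?ZU) (\<lambda>y q. q) (zPhi T \<rho> U \<sigma>) x
        (zPhi S \<pi> (T \<times> U) (prod_over \<rho> \<sigma>) x (zmap ?assoc x p))"
    by (simp add: zPhi_eq[of "S \<times> T"] zPhi_eq[of S] tensor_hom_tcls[OF Z Z ZST Z hm_hom_zPhi hm_hom_id]
        tensor_hom_tcls[OF Z Z Z ZTU hm_hom_id hm_hom_zPhi] tassoc_tcls[OF M M Z] tcls_eq_iff[OF Z ZTU])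
qed

theorem proposition4p2:
  fixes S :: "'s set" and \<pi>S :: "'s \<Rightarrow> 'm::comm_monoid_mult"
    and T :: "'t set" and \<pi>T :: "'t \<Rightarrow> 'm"
    and U :: "'u set" and \<pi>U :: "'u \<Rightarrow> 'm"
    and S' :: "'s2 set" and \<pi>S' :: "'s2 \<Rightarrow> 'm"
    and T' :: "'t2 set" and \<pi>T' :: "'t2 \<Rightarrow> 'm"
  shows
    \<comment> \<open>the structure maps are isomorphisms of HM-modules\<close>
    "hm_iso (zmod (S \<times> T) (prod_over \<pi>S \<pi>T)) (tensor (zmod S \<pi>S) (zmod T \<pi>T)) (zPhi S \<pi>S T \<pi>T)
     \<and> hm_iso (zmod unit_set unit_over) (zunit :: ('m, int) hmmod) zPsi
     \<comment> \<open>naturality in S and T\<close>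
     \<and> (\<forall>\<phi> \<chi>. over_hom S \<pi>S S' \<pi>S' \<phi> \<and> over_hom T \<pi>T T' \<pi>T' \<chi> \<longrightarrow>
          hm_eq (zmod (S \<times> T) (prod_over \<pi>S \<pi>T))
            (\<lambda>x p. tensor_hom (zmod S' \<pi>S') (zmod T' \<pi>T') (zmap \<phi>) (zmap \<chi>) x (zPhi S \<pi>S T \<pi>T x p))
            (\<lambda>x p. zPhi S' \<pi>S' T' \<pi>T' x (zmap (map_prod \<phi> \<chi>) x p)))
     \<comment> \<open>associativity coherence\<close>
     \<and> hm_eq (zmod ((S \<times> T) \<times> U) (prod_over (prod_over \<pi>S \<pi>T) \<pi>U))
          (\<lambda>x p. tassoc (zmod S \<pi>S) (zmod T \<pi>T) (zmod U \<pi>U) x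
                   (tensor_hom (tensor (zmod S \<pi>S) (zmod T \<pi>T)) (zmod U \<pi>U) (zPhi S \<pi>S T \<pi>T) (\<lambda>y q. q) x
                      (zPhi (S \<times> T) (prod_over \<pi>S \<pi>T) U \<pi>U x p)))
          (\<lambda>x p. tensor_hom (zmod S \<pi>S) (tensor (zmod T \<pi>T) (zmod U \<pi>U)) (\<lambda>y q. q) (zPhi T \<pi>T U \<pi>U) x
                   (zPhi S \<pi>S (T \<times> U) (prod_over \<pi>T \<pi>U) x (zmap (\<lambda>((s, t), u). (s, (t, u))) x p)))
     \<comment> \<open>unit coherences\<close>
     \<and> hm_eq (zmod (S \<times> unit_set) (prod_over \<pi>S unit_over))
          (\<lambda>x p. runit (zmod S \<pi>S) x
                   (tensor_hom (zmod S \<pi>S) zunit (\<lambda>y q. q) zPsi x (zPhi S \<pi>S unit_set unit_over x p)))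
          (zmap fst)
     \<and> hm_eq (zmod (unit_set \<times> S) (prod_over unit_over \<pi>S))
          (\<lambda>x p. lunit (zmod S \<pi>S) x
                   (tensor_hom zunit (zmod S \<pi>S) zPsi (\<lambda>y q. q) x (zPhi unit_set unit_over S \<pi>S x p)))
          (zmap snd)
     \<comment> \<open>symmetry coherence\<close>
     \<and> hm_eq (zmod (S \<times> T) (prod_over \<pi>S \<pi>T))
          (\<lambda>x p. tswap (zmod S \<pi>S) (zmod T \<pi>T) x (zPhi S \<pi>S T \<pi>T x p))
          (\<lambda>x p. zPhi T \<pi>T S \<pi>S x (zmap prod.swap x p))"
  by (intro conjI allI impI zPhi_iso zPsi_iso tassoc_zPhi runit_zPhi lunit_zPhi tswap_zPhi)
    (auto intro: zPhi_natural)

end
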